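(* Let $M$ be a gasket automaton satisfying the $\gamma$-isolated condition with $\mathcal P_{\alpha\gamma}\cup\mathcal P_{\beta\gamma}\ne\emptyset$, and let $M'$ be a one-step simplification of $M$ determined by the pair $(\tau,\kappa)$. Let $\Omega=\{\omega\kappa^\infty:\omega\in\Sigma^*\}$. Then there exists a bijection $g:\Omega\to\Omega$ such that for all $\mathbf x,\mathbf y\in\Omega$, $|T_M(\mathbf x,\mathbf y)-T_{M'}(g(\mathbf x),g(\mathbf y))|\le5$.
   Context: $\Sigma=\{1,\dots,N\}$, $\Sigma^*$ the finite words, $\Sigma^\infty$ the infinite words; $\kappa^\infty=\kappa\kappa\kappa\cdots$. A $\Sigma$-automaton $M$ has finite state set $Q=Q_0\cup\{Id,Exit\}$, input alphabet $\Sigma^2$, initial state $Id$, final state $Exit$, transition $\delta:Q\times\Sigma^2\to Q$ with $\delta(Id,(i,j))=Id$ iff $i=j$. Itinerary of $(\mathbf x,\mathbf y)$: $S_0=Id$, $S_k=\delta(S_{k-1},(x_k,y_k))$, stopped at $Exit$; $T_M(\mathbf x,\mathbf y)$ = largest $k$ with $S_k\neq Exit$ (possibly $\infty$). Triangle automaton: $\alpha,\beta,\gamma$ distinct elements of $\Sigma\cup\{-1,-2,-3\}$; $Q=\{S_{uv}:u\neq v\in\{\alpha,\beta,\gamma\}\}\cup\{Id,Exit\}$; $\delta(Id,(i,j))=S_{uv}\Rightarrow\delta(Id,(j,i))=S_{vu}$; $\delta(S_{uv},(i,j))=S_{uv}$ if $(i,j)=(v,u)$, else $Exit$. $\mathcal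 P_{uv}=\{(i,j):\delta(Id,(i,j))=S_{uv}\}$, $i\triangleleft_{uv}j$ iff $(i,j)\in\mathcal P_{uv}$ (iff $j\triangleleft_{vu}i$); $j$ is $uv$-minimal if no $i\triangleleft_{uv}j$, $uv$-maximal if no $j\triangleleft_{uv}k$, $uv$-isolated if both. A triangle automaton is determined by $\mathcal P_{\alpha\beta},\mathcal P_{\alpha\gamma},\mathcal P_{\beta\gamma}$. Gasket automaton: triangle automaton with (Uniqueness) $i\triangleleft_{uv}j,i\triangleleft_{uv}j'\Rightarrow j=j'$; (Gathering) any two of $a\triangleleft_{\alpha\gamma}c$, $a\triangleleft_{\beta\gamma}b$, $b\triangleleft_{\alpha\beta}c$ imply the third; (Boundary) if $\alpha\in\Sigma$ it is $\alpha\gamma$- and $\alpha\beta$-minimal; if $\beta\in\Sigma$ it is $\beta\gamma$- and $\beta\alpha$-minimal; if $\gamma\in\Sigma$ it is $\gamma\alpha$- and $\gamma\beta$-minimal. $\gamma$-isolated condition: $\alpha,\beta,\gamma\in\Sigma$; the directed graph $(\Sigma,\mathcal P_{\alpha\gamma}\cup\mathcal P_{\beta\gamma})$ has no directed cycle; $\gamma$ is $\alpha\gamma$-, $\beta\gamma$- and $\alpha\beta$-isolated. One-step simplification: $b$ is double-maximal if $\alpha\gamma$-maximal and $\beta\gamma$-maximal. Choose $(\tau,\kappa)\in\mathcal P_{\alpha\gamma}\cup\mathcal P_{\beta\gamma}$ with $\kappa$ double-maximal. If $(\tau,\kappa)\in\mathcal P_{\alpha\gamma}$: if $\kappa$ has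 no $\alpha\beta$-predecessor, $\mathcal P'_{\alpha\beta}=\mathcal P_{\alpha\beta}$, $\mathcal P'_{\alpha\gamma}=\mathcal P_{\alpha\gamma}\setminus\{(\tau,\kappa)\}$, $\mathcal P'_{\beta\gamma}=\mathcal P_{\beta\gamma}$; if $\lambda\triangleleft_{\alpha\beta}\kappa$, then $\mathcal P'_{\alpha\beta}=\mathcal P_{\alpha\beta}$, $\mathcal P'_{\alpha\gamma}=\mathcal P_{\alpha\gamma}\setminus\{(\tau,\kappa)\}$, $\mathcal P'_{\beta\gamma}=\mathcal P_{\beta\gamma}\setminus\{(\tau,\lambda)\}$. If $(\tau,\kappa)\in\mathcal P_{\beta\gamma}$, the same with $\alpha$ and $\beta$ interchanged. $M'$ is the triangle automaton determined by $\mathcal P'_{\alpha\beta},\mathcal P'_{\alpha\gamma},\mathcal P'_{\beta\gamma}$. *)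

theory Defs
  imports Main "HOL-Library.Extended_Nat"
begin

(* Alphabet Sigma = {1..N}; letters (and the labels alpha, beta, gamma, which may
   also be -1,-2,-3) are integers. *)
definition Sig :: "nat \<Rightarrow> int set" where
  "Sig N = {1..int N}"

datatype tstate = Id | Exit | St int int

datatype tri = Tri (ta: int) (tb: int) (tc: int)
  (Pab: "(int \<times> int) set") (Pag: "(int \<times> int) set") (Pbg: "(int \<times> int) set")

definition Prel :: "tri \<Rightarrow> int \<Rightarrow> int \<Rightarrow> (int \<times> int) set" where
  "Prel M u v =
    (if (u, v) = (ta M, tb M) then Pab M
     else if (u, v) = (tb M, ta M) then (Pab M)\<inverse>
     else if (u, v) = (ta M, tc M) then Pag M
     else if (u, v) = (tc M, ta M) then (Pag M)\<inverse>
     else if (u, v) = (tb M, tc M) then Pbg M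
     else if (u, v) = (tc M, tb M) then (Pbg M)\<inverse>
     else {})"

definition labpairs :: "tri \<Rightarrow> (int \<times> int) set" where
  "labpairs M = {(u, v). u \<in> {ta M, tb M, tc M} \<and> v \<in> {ta M, tb M, tc M} \<and> u \<noteq> v}"

fun tri_delta :: "tri \<Rightarrow> tstate \<Rightarrow> int \<times> int \<Rightarrow> tstate" where
  "tri_delta M Id (i, j) =
    (if i = j then Id
     else if (i, j) \<in> Prel M (ta M) (tb M) then St (ta M) (tb M)
     else if (i, j) \<in> Prel M (tb M) (ta M) then St (tb M) (ta M)
     else if (i, j) \<in> Prel M (ta M) (tc M) then St (ta M) (tc M)
     else if (i, j) \<in> Prel M (tc M) (ta M) then St (tc M) (ta M)
     else if (i, j) \<in> Prel M (tb M) (tc M) then St (tb M) (tc M)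
     else if (i, j) \<in> Prel M (tc M) (tb M) then St (tc M) (tb M)
     else Exit)"
| "tri_delta M (St u v) (i, j) = (if (i, j) = (v, u) then St u v else Exit)"
| "tri_delta M Exit p = Exit"

(* Well-formedness of a triangle automaton over Sigma = {1..N}: distinct labels in
   Sigma \<union> {-1,-2,-3}, relations on Sigma, and delta well defined, i.e. the six
   sets P_uv are pairwise disjoint and contain no diagonal pair. *)
definition triangle_automaton :: "nat \<Rightarrow> tri \<Rightarrow> bool" where
  "triangle_automaton N M \<longleftrightarrow>
     ta M \<noteq> tb M \<and> ta M \<noteq> tc M \<and> tb M \<noteq> tc M \<and>
     {ta M, tb M, tc M} \<subseteq> Sig N \<union> {-1, -2, -3} \<and>
     Pab M \<subseteq> Sig N \<times> Sig N \<and> Pag M \<subseteq> Sig N \<times> Sig N \<and> Pbg M \<subseteq> Sig N \<times> Sig N \<and>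
     (\<forall>p\<in>labpairs M. \<forall>q\<in>labpairs M. p \<noteq> q \<longrightarrow>
        Prel M (fst p) (snd p) \<inter> Prel M (fst q) (snd q) = {}) \<and>
     (\<forall>p\<in>labpairs M. \<forall>i. (i, i) \<notin> Prel M (fst p) (snd p))"

definition uv_minimal :: "tri \<Rightarrow> int \<Rightarrow> int \<Rightarrow> int \<Rightarrow> bool" where
  "uv_minimal M u v j \<longleftrightarrow> \<not> (\<exists>i. (i, j) \<in> Prel M u v)"

definition uv_maximal :: "tri \<Rightarrow> int \<Rightarrow> int \<Rightarrow> int \<Rightarrow> bool" where
  "uv_maximal M u v j \<longleftrightarrow> \<not> (\<exists>k. (j, k) \<in> Prel M u v)"

definition uv_isolated :: "tri \<Rightarrow> int \<Rightarrow> int \<Rightarrow> int \<Rightarrow> bool" where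
  "uv_isolated M u v j \<longleftrightarrow> uv_minimal M u v j \<and> uv_maximal M u v j"

definition gasket_automaton :: "nat \<Rightarrow> tri \<Rightarrow> bool" where
  "gasket_automaton N M \<longleftrightarrow>
     triangle_automaton N M \<and>
     \<comment> \<open>Uniqueness\<close>
     (\<forall>(u, v)\<in>labpairs M. \<forall>i j j'. (i, j) \<in> Prel M u v \<longrightarrow> (i, j') \<in> Prel M u v \<longrightarrow> j = j') \<and>
     \<comment> \<open>Gathering\<close>
     (\<forall>a b c.
        let A = ((a, c) \<in> Pag M); B = ((a, b) \<in> Pbg M); C = ((b, c) \<in> Pab M) in
        (A \<and> B \<longrightarrow> C) \<and> (A \<and> C \<longrightarrow> B) \<and> (B \<and> C \<longrightarrow> A)) \<and>
     \<comment> \<open>Boundary\<close>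
     (ta M \<in> Sig N \<longrightarrow> uv_minimal M (ta M) (tc M) (ta M) \<and> uv_minimal M (ta M) (tb M) (ta M)) \<and>
     (tb M \<in> Sig N \<longrightarrow> uv_minimal M (tb M) (tc M) (tb M) \<and> uv_minimal M (tb M) (ta M) (tb M)) \<and>
     (tc M \<in> Sig N \<longrightarrow> uv_minimal M (tc M) (ta M) (tc M) \<and> uv_minimal M (tc M) (tb M) (tc M))"

definition gamma_isolated :: "nat \<Rightarrow> tri \<Rightarrow> bool" where
  "gamma_isolated N M \<longleftrightarrow>
     ta M \<in> Sig N \<and> tb M \<in> Sig N \<and> tc M \<in> Sig N \<and>
     acyclic (Pag M \<union> Pbg M) \<and>
     uv_isolated M (ta M) (tc M) (tc M) \<and> uv_isolated M (tb M) (tc M) (tc M) \<and>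
     uv_isolated M (ta M) (tb M) (tc M)"

definition double_maximal :: "tri \<Rightarrow> int \<Rightarrow> bool" where
  "double_maximal M b \<longleftrightarrow> uv_maximal M (ta M) (tc M) b \<and> uv_maximal M (tb M) (tc M) b"

definition one_step_simplification :: "tri \<Rightarrow> int \<Rightarrow> int \<Rightarrow> tri \<Rightarrow> bool" where
  "one_step_simplification M \<tau> \<kappa> M' \<longleftrightarrow>
     (\<tau>, \<kappa>) \<in> Pag M \<union> Pbg M \<and> double_maximal M \<kappa> \<and>
     ((\<tau>, \<kappa>) \<in> Pag M \<longrightarrow>
        ((\<not> (\<exists>l. (l, \<kappa>) \<in> Prel M (ta M) (tb M)) \<and>
           M' = Tri (ta M) (tb M) (tc M) (Pab M) (Pag M - {(\<tau>, \<kappa>)}) (Pbg M)) \<or>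
         (\<exists>l. (l, \<kappa>) \<in> Prel M (ta M) (tb M) \<and>
           M' = Tri (ta M) (tb M) (tc M) (Pab M) (Pag M - {(\<tau>, \<kappa>)}) (Pbg M - {(\<tau>, l)})))) \<and>
     ((\<tau>, \<kappa>) \<in> Pbg M \<longrightarrow>
        ((\<not> (\<exists>l. (l, \<kappa>) \<in> Prel M (tb M) (ta M)) \<and>
           M' = Tri (ta M) (tb M) (tc M) (Pab M) (Pag M) (Pbg M - {(\<tau>, \<kappa>)})) \<or>
         (\<exists>l. (l, \<kappa>) \<in> Prel M (tb M) (ta M) \<and>
           M' = Tri (ta M) (tb M) (tc M) (Pab M) (Pag M - {(\<tau>, l)}) (Pbg M - {(\<tau>, \<kappa>)}))))"

(* Itinerary: S_0 = Id, S_k = delta(S_{k-1}, (x_k, y_k)), stopped at Exit.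
   Infinite words are functions nat \<Rightarrow> int; x k is the letter x_{k+1}. *)
fun itin :: "(tstate \<Rightarrow> int \<times> int \<Rightarrow> tstate) \<Rightarrow> (nat \<Rightarrow> int) \<Rightarrow> (nat \<Rightarrow> int) \<Rightarrow> nat \<Rightarrow> tstate" where
  "itin \<delta> x y 0 = Id"
| "itin \<delta> x y (Suc k) = (if itin \<delta> x y k = Exit then Exit else \<delta> (itin \<delta> x y k) (x k, y k))"

definition Ttime :: "(tstate \<Rightarrow> int \<times> int \<Rightarrow> tstate) \<Rightarrow> (nat \<Rightarrow> int) \<Rightarrow> (nat \<Rightarrow> int) \<Rightarrow> enat" where
  "Ttime \<delta> x y = Sup {enat k | k. itin \<delta> x y k \<noteq> Exit}"

definition T_M :: "tri \<Rightarrow> (nat \<Rightarrow> int) \<Rightarrow> (nat \<Rightarrow> int) \<Rightarrow> enat" where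
  "T_M M = Ttime (tri_delta M)"

definition Omega :: "nat \<Rightarrow> int \<Rightarrow> (nat \<Rightarrow> int) set" where
  "Omega N \<kappa> = {x. (\<forall>k. x k \<in> Sig N) \<and> (\<exists>n. \<forall>k\<ge>n. x k = \<kappa>)}"

end

(*
  The bijection is a recoding that acts block by block. Let A be the label with
  tau <|_{A gamma} kappa and let G = gamma. Reading from the left, a word is cut into blocks
  tau G^r (r >= 2, the run maximal), kappa A^s kappa G (s >= 1), kappa kappa G and single letters,
  which are replaced by kappa A^(r-2) kappa G, kappa A^(s-1) kappa G G, tau G G and the letter.
  Blocks keep their lengths and only the first two kinds are recoded into a block
  kappa A^a kappa G, so the recoding is injective on Omega; it maps each of the finite sets of
  words that equal kappa from a fixed position on into itself, hence it is a bijection.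

  Two words with the same first block are recoded alike there, and both itineraries are just
  delayed by the length of the block. When the first blocks differ, the itinerary in M stays in a
  single state S_uv along two constant runs, e.g. tau G^r against kappa A^t, which survives only
  thanks to tau <|_{A gamma} kappa. Since gamma is isolated, kappa double-maximal and A minimal,
  the recoded pair then survives in M', where the pairs (tau, kappa) and (tau, lambda),
  lambda <|_{AB} kappa, are gone, for the same number of steps up to an error of at most five.
*)

theory Submission
  imports Defs
begin

definition shift :: "nat \<Rightarrow> (nat \<Rightarrow> 'a) \<Rightarrow> nat \<Rightarrow> 'a" where
  "shift n x = (\<lambda>i. x (n + i))"

lemma shift_apply [simp]: "shift n x i = x (n + i)"
  by (simp add: shift_def)

definition agree_below :: "(nat \<Rightarrow> 'a) \<Rightarrow> (nat \<Rightarrow> 'a) \<Rightarrow> nat \<Rightarrow> bool" where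
  "agree_below x y n \<longleftrightarrow> (\<forall>i<n. x i = y i)"

lemma first_difference:
  assumes "\<not> agree_below x y n"
  obtains k where "k < n" "agree_below x y k" "x k \<noteq> y k"
proof -
  obtain i where i: "i < n" "x i \<noteq> y i" using assms unfolding agree_below_def by blast
  let ?k = "LEAST i. x i \<noteq> y i"
  have "?k \<le> i" using i(2) by (rule Least_le)
  moreover have "x ?k \<noteq> y ?k" using i(2) by (rule LeastI)
  moreover have "agree_below x y ?k" unfolding agree_below_def using not_less_Least by blast
  ultimately show ?thesis using that i(1) by (meson le_less_trans)
qed

lemma run_end:
  fixes P :: "nat \<Rightarrow> bool"
  assumes "\<not> (\<forall>i. P i)"
  obtains t where "\<forall>i<t. P i" "\<not> P t"
  using assms exists_least_iff[of "\<lambda>i. \<not> P i"] by blast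

text \<open>A triangle automaton is determined by its moves out of \<open>Id\<close>: \<open>R a b\<close> is the move on
  the letter pair \<open>(a, b)\<close>, \<open>a \<noteq> b\<close>.\<close>

definition delta_of :: "(int \<Rightarrow> int \<Rightarrow> tstate) \<Rightarrow> tstate \<Rightarrow> int \<times> int \<Rightarrow> tstate" where
  "delta_of R s p = (case s of
      Id \<Rightarrow> (if fst p = snd p then Id else R (fst p) (snd p))
    | St u v \<Rightarrow> (if p = (v, u) then St u v else Exit)
    | Exit \<Rightarrow> Exit)"

lemma delta_of_simps [simp]:
  "delta_of R Id (a, b) = (if a = b then Id else R a b)"
  "delta_of R (St u v) (a, b) = (if (a, b) = (v, u) then St u v else Exit)"
  "delta_of R Exit p = Exit"
  by (auto simp: delta_of_def)

lemma tri_delta_eq_delta_of: "tri_delta M = delta_of (\<lambda>a b. tri_delta M Id (a, b))"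
proof (intro ext)
  fix s p show "tri_delta M s p = delta_of (\<lambda>a b. tri_delta M Id (a, b)) s p"
    by (cases s; cases p) simp_all
qed

definition leaves_Id :: "(int \<Rightarrow> int \<Rightarrow> tstate) \<Rightarrow> bool" where
  "leaves_Id R \<longleftrightarrow> (\<forall>a b. a \<noteq> b \<longrightarrow> R a b \<noteq> Id)"

abbreviation T_of :: "(int \<Rightarrow> int \<Rightarrow> tstate) \<Rightarrow> (nat \<Rightarrow> int) \<Rightarrow> (nat \<Rightarrow> int) \<Rightarrow> enat" where
  "T_of R \<equiv> Ttime (delta_of R)"

lemma T_M_eq_T_of: "T_M M = T_of (\<lambda>a b. tri_delta M Id (a, b))"
  unfolding T_M_def by (subst tri_delta_eq_delta_of) (rule refl)

lemma itin_Exit_mono: "itin d x y k = Exit \<Longrightarrow> k \<le> k' \<Longrightarrow> itin d x y k' = Exit"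
  by (induction k') (auto simp: le_Suc_eq)

lemma itin_agree_below: "agree_below x y k \<Longrightarrow> itin (delta_of R) x y k = Id"
  by (induction k) (auto simp: agree_below_def)

lemma itin_first_diff:
  "agree_below x y j \<Longrightarrow> x j \<noteq> y j \<Longrightarrow> itin (delta_of R) x y (Suc j) = R (x j) (y j)"
  using itin_agree_below[of x y j R] by simp

lemma itin_St_run:
  "itin (delta_of R) x y (Suc j) = St u v \<Longrightarrow> \<forall>i<m. x (Suc j + i) = v \<and> y (Suc j + i) = u \<Longrightarrow>
    itin (delta_of R) x y (Suc j + m) = St u v"
  by (induction m) auto

lemma itin_St_or_Exit:
  "itin (delta_of R) x y k = St u v \<Longrightarrow> k \<le> k' \<Longrightarrow>
    itin (delta_of R) x y k' = St u v \<or> itin (delta_of R) x y k' = Exit"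
proof (induction k')
  case (Suc k')
  show ?case
  proof (cases "k = Suc k'")
    case False
    then have "itin (delta_of R) x y k' \<in> {St u v, Exit}" using Suc by simp
    then show ?thesis by (cases "x k' = v \<and> y k' = u") auto
  qed (use Suc in simp)
qed simp

lemma enat_le_Ttime: "itin d x y k \<noteq> Exit \<Longrightarrow> enat k \<le> Ttime d x y"
  unfolding Ttime_def by (rule Sup_upper) auto

lemma Ttime_le_enat: "itin d x y (Suc k) = Exit \<Longrightarrow> Ttime d x y \<le> enat k"
  unfolding Ttime_def
proof (rule Sup_least)
  fix z assume z: "z \<in> {enat k' |k'. itin d x y k' \<noteq> Exit}" and "itin d x y (Suc k) = Exit"
  then have "k' \<le> k" if "itin d x y k' \<noteq> Exit" for k'
    using that itin_Exit_mono not_less_eq_eq by blast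
  with z show "z \<le> enat k" by auto
qed

lemma enat_le_Ttime_iff: "enat k \<le> Ttime d x y \<longleftrightarrow> itin d x y k \<noteq> Exit"
proof
  assume le: "enat k \<le> Ttime d x y"
  show "itin d x y k \<noteq> Exit"
  proof (cases k)
    case (Suc k0)
    show ?thesis
    proof
      assume "itin d x y k = Exit"
      then have "Ttime d x y \<le> enat k0" using Ttime_le_enat Suc by blast
      then have "enat (Suc k0) \<le> enat k0" using le Suc order_trans by blast
      then show False by simp
    qed
  qed simp
qed (rule enat_le_Ttime)

lemma enat_le_T_of_agree: "agree_below x y n \<Longrightarrow> enat n \<le> T_of R x y"
  by (rule enat_le_Ttime) (simp add: itin_agree_below)

lemma enat_le_T_of_run:
  assumes "agree_below x y j" "x j \<noteq> y j" "R (x j) (y j) = St u v"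
    and "\<forall>i<m. x (Suc j + i) = v \<and> y (Suc j + i) = u"
  shows "enat (Suc j + m) \<le> T_of R x y"
proof (rule enat_le_Ttime)
  have "itin (delta_of R) x y (Suc j) = St u v" using itin_first_diff assms(1-3) by simp
  then show "itin (delta_of R) x y (Suc j + m) \<noteq> Exit" using itin_St_run assms(4) by simp
qed

lemma T_of_le_run_end:
  assumes "agree_below x y j" "x j \<noteq> y j" "leaves_Id R"
    and "\<forall>u v. R (x j) (y j) = St u v \<longrightarrow> (x (Suc j + m), y (Suc j + m)) \<noteq> (v, u)"
  shows "T_of R x y \<le> enat (Suc j + m)"
proof (rule Ttime_le_enat)
  have first: "itin (delta_of R) x y (Suc j) = R (x j) (y j)" using itin_first_diff assms(1,2) .
  show "itin (delta_of R) x y (Suc (Suc j + m)) = Exit"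
  proof (cases "R (x j) (y j)")
    case Id then show ?thesis using assms(2,3) unfolding leaves_Id_def by blast
  next
    case Exit
    then have "itin (delta_of R) x y (Suc j) = Exit" using first by simp
    then show ?thesis by (rule itin_Exit_mono) simp
  next
    case (St u v)
    let ?K = "Suc j + m"
    have "itin (delta_of R) x y ?K = St u v \<or> itin (delta_of R) x y ?K = Exit"
      using itin_St_or_Exit[of R x y "Suc j" u v ?K] first St by simp
    moreover have "(x ?K, y ?K) \<noteq> (v, u)" using assms(4) St by blast
    ultimately show ?thesis by (simp only: itin.simps) auto
  qed
qed

lemma T_of_le_Exit:
  assumes "agree_below x y j" "x j \<noteq> y j" "R (x j) (y j) = Exit"
  shows "T_of R x y \<le> enat j"
  by (rule Ttime_le_enat) (simp only: itin_first_diff[OF assms(1,2)] assms(3))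

lemma enat_le_T_of_run_0:
  "x 0 \<noteq> y 0 \<Longrightarrow> R (x 0) (y 0) = St u v \<Longrightarrow> \<forall>i. 1 \<le> i \<and> i \<le> m \<longrightarrow> x i = v \<and> y i = u \<Longrightarrow>
    enat (Suc m) \<le> T_of R x y"
  using enat_le_T_of_run[of x y 0 R u v m] by (simp add: agree_below_def)

lemma T_of_le_run_end_0:
  "x 0 \<noteq> y 0 \<Longrightarrow> leaves_Id R \<Longrightarrow>
    \<forall>u v. R (x 0) (y 0) = St u v \<longrightarrow> (x (Suc m), y (Suc m)) \<noteq> (v, u) \<Longrightarrow> T_of R x y \<le> enat (Suc m)"
  using T_of_le_run_end[of x y 0 R m] by (simp add: agree_below_def)

lemma T_of_le_Exit_0: "x 0 \<noteq> y 0 \<Longrightarrow> R (x 0) (y 0) = Exit \<Longrightarrow> T_of R x y \<le> enat 0"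
  using T_of_le_Exit[of x y 0 R] by (simp add: agree_below_def)

lemma T_of_eq_run_0:
  assumes "x 0 \<noteq> y 0" "leaves_Id R" "R (x 0) (y 0) = St u v"
    and "\<forall>i<m. x (Suc i) = v \<and> y (Suc i) = u" "(x (Suc m), y (Suc m)) \<noteq> (v, u)"
  shows "T_of R x y = enat (Suc m)"
proof (rule antisym)
  show "T_of R x y \<le> enat (Suc m)" using T_of_le_run_end_0[of x y R m] assms(1,2,3,5) by simp
  show "enat (Suc m) \<le> T_of R x y"
  proof (rule enat_le_T_of_run_0[of x y R u v m, OF assms(1,3)])
    show "\<forall>i. 1 \<le> i \<and> i \<le> m \<longrightarrow> x i = v \<and> y i = u"
      using assms(4) by (metis One_nat_def Suc_le_D Suc_le_lessD)
  qed
qed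

lemma T_of_eq_run_truncated:
  assumes "x 0 \<noteq> y 0" "leaves_Id R" "R (x 0) (y 0) = St u v"
    and "\<forall>i<r. x (Suc i) = v" "x (Suc r) \<noteq> v"
  obtains t where "t \<le> r" "\<forall>i<t. y (Suc i) = u" "y (Suc t) \<noteq> u \<or> t = r" "T_of R x y = enat (Suc t)"
proof -
  have "\<not> (\<forall>i. y (Suc i) = u \<and> i < r)" by blast
  then obtain t where t: "\<forall>i<t. y (Suc i) = u \<and> i < r" "\<not> (y (Suc t) = u \<and> t < r)" by (rule run_end)
  have "t \<le> r" using t(1) by (meson leI less_irrefl)
  moreover have "y (Suc t) \<noteq> u \<or> t = r" using t(2) \<open>t \<le> r\<close> by auto
  moreover have "T_of R x y = enat (Suc t)"
  proof (rule T_of_eq_run_0[of x y R u v t, OF assms(1-3)])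
    show "\<forall>i<t. x (Suc i) = v \<and> y (Suc i) = u" using t(1) assms(4) by auto
    show "(x (Suc t), y (Suc t)) \<noteq> (v, u)" using calculation(2) assms(5) by auto
  qed
  ultimately show ?thesis using that t(1) by blast
qed

lemma T_of_refl: "T_of R x x = \<infinity>"
proof (rule ccontr)
  assume "T_of R x x \<noteq> \<infinity>"
  then obtain m where "T_of R x x = enat m" by auto
  moreover have "enat (Suc m) \<le> T_of R x x" by (rule enat_le_T_of_agree) (simp add: agree_below_def)
  ultimately show False by simp
qed

lemma itin_shift:
  "agree_below x y n \<Longrightarrow> itin (delta_of R) x y (n + k) = itin (delta_of R) (shift n x) (shift n y) k"
  by (induction k) (auto simp: itin_agree_below)

lemma le_enat_trans: "t \<le> enat a \<Longrightarrow> a \<le> b \<Longrightarrow> t \<le> enat b"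
  by (meson enat_ord_simps(1) order_trans)

lemma enat_eqI:
  fixes a b :: enat
  assumes "\<And>k. enat k \<le> a \<longleftrightarrow> enat k \<le> b"
  shows "a = b"
proof (rule antisym)
  have le: "a \<le> b" if "\<And>k. enat k \<le> a \<longleftrightarrow> enat k \<le> b" for a b :: enat
  proof (cases b)
    case (enat n)
    then have "\<not> enat (Suc n) \<le> a" using that[of "Suc n"] by simp
    then show ?thesis using enat by (cases a) auto
  qed simp
  show "a \<le> b" "b \<le> a" using le assms by blast+
qed

lemma T_of_shift:
  assumes "agree_below x y n"
  shows "T_of R x y = enat n + T_of R (shift n x) (shift n y)"
proof (rule enat_eqI)
  fix k
  show "enat k \<le> T_of R x y \<longleftrightarrow> enat k \<le> enat n + T_of R (shift n x) (shift n y)"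
  proof (cases "k \<le> n")
    case True
    then have "agree_below x y k" using assms by (auto simp: agree_below_def)
    then show ?thesis using True enat_le_T_of_agree
      by (cases "T_of R (shift n x) (shift n y)") auto
  next
    case False
    then obtain k' where k: "k = n + k'" by (metis le_add_diff_inverse nat_le_linear)
    have "enat k \<le> enat n + T_of R (shift n x) (shift n y) \<longleftrightarrow> enat k' \<le> T_of R (shift n x) (shift n y)"
      using k by (cases "T_of R (shift n x) (shift n y)") auto
    then show ?thesis using k itin_shift[OF assms, of R k'] enat_le_Ttime_iff by metis
  qed
qed

fun swap_state :: "tstate \<Rightarrow> tstate" where
  "swap_state (St u v) = St v u"
| "swap_state Id = Id"
| "swap_state Exit = Exit"

definition swap_symmetric :: "(int \<Rightarrow> int \<Rightarrow> tstate) \<Rightarrow> bool" where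
  "swap_symmetric R \<longleftrightarrow> (\<forall>a b. a \<noteq> b \<longrightarrow> R b a = swap_state (R a b))"

lemma itin_swap:
  "swap_symmetric R \<Longrightarrow> itin (delta_of R) y x k = swap_state (itin (delta_of R) x y k)"
proof (induction k)
  case (Suc k)
  show ?case
  proof (cases "itin (delta_of R) x y k")
    case Id
    have "x k \<noteq> y k \<Longrightarrow> R (y k) (x k) = swap_state (R (x k) (y k))"
      using Suc.prems unfolding swap_symmetric_def by blast
    then show ?thesis using Suc Id by (cases "x k = y k") simp_all
  qed (use Suc in auto)
qed simp

lemma T_of_swap: "swap_symmetric R \<Longrightarrow> T_of R y x = T_of R x y"
proof -
  assume "swap_symmetric R"
  then have "itin (delta_of R) y x k = Exit \<longleftrightarrow> itin (delta_of R) x y k = Exit" for k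
    using itin_swap[of R y x k] by (cases "itin (delta_of R) x y k") simp_all
  then show ?thesis unfolding Ttime_def by simp
qed

text \<open>The blocks \<open>\<tau> G\<^sup>r\<close>, \<open>\<kappa> A\<^sup>s \<kappa> G\<close>, \<open>\<kappa> \<kappa> G\<close> and single letters, with the lengths
  \<open>r + 1\<close>, \<open>s + 3\<close>, \<open>3\<close> and \<open>1\<close>.\<close>

datatype block = TauRun nat | KapRun nat | KapKap | Letter

fun block_len :: "block \<Rightarrow> nat" where
  "block_len (TauRun r) = Suc r"
| "block_len (KapRun s) = s + 3"
| "block_len KapKap = 3"
| "block_len Letter = 1"

lemma block_len_pos: "0 < block_len b"
  by (cases b) auto

lemma block_len_less: "\<not> i < block_len b \<Longrightarrow> i - block_len b < i"
  by (metis diff_less less_le_trans not_le block_len_pos)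

locale recoding =
  fixes tau kap A G :: int
  assumes tau_ne_kap: "tau \<noteq> kap" and kap_ne_A: "kap \<noteq> A" and tau_ne_G: "tau \<noteq> G"
    and kap_ne_G: "kap \<noteq> G" and A_ne_G: "A \<noteq> G"
begin

definition tau_run :: "(nat \<Rightarrow> int) \<Rightarrow> bool" where
  "tau_run x \<longleftrightarrow> x 0 = tau \<and> x (Suc 0) = G \<and> x (Suc (Suc 0)) = G \<and> (\<exists>i. x (Suc i) \<noteq> G)"

definition kap_run :: "(nat \<Rightarrow> int) \<Rightarrow> nat \<Rightarrow> bool" where
  "kap_run x s \<longleftrightarrow>
    x 0 = kap \<and> (\<forall>i. 1 \<le> i \<and> i \<le> s \<longrightarrow> x i = A) \<and> x (Suc s) = kap \<and> x (Suc (Suc s)) = G"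

definition first_block :: "(nat \<Rightarrow> int) \<Rightarrow> block" where
  "first_block x =
    (if tau_run x then TauRun (LEAST i. x (Suc i) \<noteq> G)
     else if \<exists>s. kap_run x s then
       (let s = LEAST s. kap_run x s in if s = 0 then KapKap else KapRun s)
     else Letter)"

definition block_image :: "block \<Rightarrow> int \<Rightarrow> nat \<Rightarrow> int" where
  "block_image b c i = (case b of
      TauRun r \<Rightarrow> (if i = 0 then kap else if i < r - 1 then A else if i = r - 1 then kap else G)
    | KapRun s \<Rightarrow> (if i = 0 then kap else if i < s then A else if i = s then kap else G)
    | KapKap \<Rightarrow> (if i = 0 then tau else G)
    | Letter \<Rightarrow> c)"

function recode :: "(nat \<Rightarrow> int) \<Rightarrow> nat \<Rightarrow> int" where
  "recode x i =
    (if i < block_len (first_block x) then block_image (first_block x) (x 0) i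
     else recode (shift (block_len (first_block x)) x) (i - block_len (first_block x)))"
  by auto
termination by (relation "measure snd") (auto simp: block_len_less)

declare recode.simps [simp del]

lemma recode_in_block: "i < block_len (first_block x) \<Longrightarrow> recode x i = block_image (first_block x) (x 0) i"
  by (simp add: recode.simps)

lemma recode_after_block:
  "recode x (block_len (first_block x) + i) = recode (shift (block_len (first_block x)) x) i"
  by (subst recode.simps) simp

lemma shift_recode:
  "shift (block_len (first_block x)) (recode x) = recode (shift (block_len (first_block x)) x)"
  by (rule ext) (simp add: recode_after_block)

lemma kap_run_unique: "kap_run x s \<Longrightarrow> kap_run x s' \<Longrightarrow> s = s'"
proof (rule ccontr)
  assume a: "kap_run x s" "kap_run x s'" "s \<noteq> s'"
  show False
  proof (cases "s < s'")
    case True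
    then have "x (Suc s) = A" using a(2) unfolding kap_run_def by auto
    then show False using a(1) kap_ne_A unfolding kap_run_def by simp
  next
    case False
    then have "x (Suc s') = A" using a(1,3) unfolding kap_run_def by auto
    then show False using a(2) kap_ne_A unfolding kap_run_def by simp
  qed
qed

lemma kap_run_agree: "kap_run x s \<Longrightarrow> agree_below x y (s + 3) \<Longrightarrow> kap_run y s"
  unfolding kap_run_def agree_below_def by simp

lemma kap_runs_agree:
  assumes "kap_run x s" "kap_run y s"
  shows "agree_below x y (s + 3)"
  unfolding agree_below_def
proof (intro allI impI)
  fix i assume "i < s + 3"
  then have "i = 0 \<or> (1 \<le> i \<and> i \<le> s) \<or> i = Suc s \<or> i = Suc (Suc s)" by arith
  then show "x i = y i" using assms unfolding kap_run_def by auto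
qed

lemma TauRun_D:
  assumes "first_block x = TauRun r"
  shows "x 0 = tau" "\<And>i. 1 \<le> i \<Longrightarrow> i \<le> r \<Longrightarrow> x i = G" "x (Suc r) \<noteq> G" "2 \<le> r"
proof -
  have run: "tau_run x" and r: "(LEAST i. x (Suc i) \<noteq> G) = r"
    using assms unfolding first_block_def by (auto split: if_splits simp: Let_def)
  then have ex: "\<exists>i. x (Suc i) \<noteq> G" and x012: "x 0 = tau" "x (Suc 0) = G" "x (Suc (Suc 0)) = G"
    unfolding tau_run_def by auto
  show "x 0 = tau" by (fact x012(1))
  show stop: "x (Suc r) \<noteq> G" using LeastI_ex[OF ex] r by simp
  have before: "x (Suc i) = G" if "i < r" for i using not_less_Least that r by blast
  show "x i = G" if "1 \<le> i" "i \<le> r" for i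
    using before[of "i - 1"] that by simp
  show "2 \<le> r"
  proof (rule ccontr)
    assume "\<not> 2 \<le> r"
    then have "r = 0 \<or> r = 1" by auto
    then show False using stop x012 by auto
  qed
qed

lemma KapRun_D:
  assumes "first_block x = KapRun s"
  shows "kap_run x s" "1 \<le> s"
  using assms unfolding first_block_def by (auto split: if_splits simp: Let_def dest: LeastI)

lemma KapKap_D: "first_block x = KapKap \<Longrightarrow> kap_run x 0"
  unfolding first_block_def by (auto split: if_splits simp: Let_def dest: LeastI)

lemma Letter_D:
  assumes "first_block x = Letter"
  shows "\<not> tau_run x" "\<not> kap_run x s"
  using assms unfolding first_block_def by (auto split: if_splits simp: Let_def)

lemma first_block_LetterI: "\<not> tau_run x \<Longrightarrow> (\<And>s. \<not> kap_run x s) \<Longrightarrow> first_block x = Letter"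
  unfolding first_block_def by auto

lemma first_block_Letter_other: "x 0 \<noteq> tau \<Longrightarrow> x 0 \<noteq> kap \<Longrightarrow> first_block x = Letter"
  by (rule first_block_LetterI) (auto simp: tau_run_def kap_run_def)

lemma first_block_const:
  assumes "x 0 = c" "x (Suc 0) = c" "x (Suc (Suc 0)) = c"
  shows "first_block x = Letter"
proof (rule first_block_LetterI)
  show "\<not> tau_run x" using assms tau_ne_G unfolding tau_run_def by auto
  show "\<not> kap_run x s" for s
    using assms kap_ne_G kap_ne_A unfolding kap_run_def by (cases s) auto
qed

lemma recode_0:
  "recode x 0 = (case first_block x of TauRun _ \<Rightarrow> kap | KapRun _ \<Rightarrow> kap | KapKap \<Rightarrow> tau | Letter \<Rightarrow> x 0)"
  using recode_in_block[of 0 x] block_len_pos[of "first_block x"]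
  by (cases "first_block x") (simp_all add: block_image_def)

lemma recode_0_eq_G_iff: "recode x 0 = G \<longleftrightarrow> x 0 = G"
proof (cases "first_block x")
  case (TauRun r)
  then show ?thesis using recode_0 TauRun_D(1)[OF TauRun] kap_ne_G tau_ne_G by simp
next
  case (KapRun s)
  then show ?thesis using recode_0 KapRun_D[OF KapRun] kap_ne_G by (simp add: kap_run_def)
next
  case KapKap
  then show ?thesis using recode_0 KapKap_D[OF KapKap] kap_ne_G tau_ne_G by (simp add: kap_run_def)
qed (simp add: recode_0)

lemma recode_Letter_0: "first_block x = Letter \<Longrightarrow> recode x 0 = x 0"
  by (simp add: recode_0)

lemma recode_Letter_Suc: "first_block x = Letter \<Longrightarrow> recode x (Suc i) = recode (shift 1 x) i"
  using recode_after_block[of x i] by simp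

lemma recode_TauRun:
  assumes b: "first_block x = TauRun r"
  shows "recode x 0 = kap" "\<And>i. 1 \<le> i \<Longrightarrow> i + 2 \<le> r \<Longrightarrow> recode x i = A" "recode x (r - 1) = kap"
    "recode x r = G" "recode x (Suc r) \<noteq> G" "shift (Suc r) (recode x) = recode (shift (Suc r) x)"
proof -
  have r2: "2 \<le> r" using TauRun_D(4)[OF b] .
  have img: "recode x i = block_image (TauRun r) (x 0) i" if "i \<le> r" for i
    using recode_in_block[of i x] b that by simp
  show "recode x 0 = kap" using img[of 0] by (simp add: block_image_def)
  show "recode x i = A" if "1 \<le> i" "i + 2 \<le> r" for i
  proof -
    have "i \<noteq> 0" "i < r - 1" "i \<le> r" using that by arith+
    then show ?thesis using img[of i] by (simp add: block_image_def)
  qed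
  show "recode x (r - 1) = kap" using img[of "r - 1"] r2 by (simp add: block_image_def)
  have "\<not> r < r - 1" "r \<noteq> r - 1" "r \<noteq> 0" using r2 by arith+
  then show "recode x r = G" using img[of r] by (simp add: block_image_def)
  show sh: "shift (Suc r) (recode x) = recode (shift (Suc r) x)" using shift_recode[of x] b by simp
  have "recode (shift (Suc r) x) 0 \<noteq> G" using recode_0_eq_G_iff TauRun_D(3)[OF b] by simp
  then show "recode x (Suc r) \<noteq> G" using fun_cong[OF sh, of 0] by simp
qed

lemma recode_KapRun:
  assumes b: "first_block x = KapRun s"
  shows "recode x 0 = kap" "\<And>i. 1 \<le> i \<Longrightarrow> i < s \<Longrightarrow> recode x i = A" "recode x s = kap"
    "recode x (Suc s) = G" "recode x (Suc (Suc s)) = G" "shift (s + 3) (recode x) = recode (shift (s + 3) x)"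
proof -
  have s1: "1 \<le> s" using KapRun_D[OF b] by simp
  have img: "recode x i = block_image (KapRun s) (x 0) i" if "i < s + 3" for i
    using recode_in_block[of i x] b that by simp
  show "recode x 0 = kap" using img[of 0] by (simp add: block_image_def)
  show "\<And>i. 1 \<le> i \<Longrightarrow> i < s \<Longrightarrow> recode x i = A" using img by (simp add: block_image_def)
  show "recode x s = kap" using img[of s] s1 by (simp add: block_image_def)
  show "recode x (Suc s) = G" using img[of "Suc s"] s1 by (simp add: block_image_def)
  show "recode x (Suc (Suc s)) = G" using img[of "Suc (Suc s)"] s1 by (simp add: block_image_def)
  show "shift (s + 3) (recode x) = recode (shift (s + 3) x)" using shift_recode[of x] b by simp
qed

lemma recode_KapKap:
  assumes b: "first_block x = KapKap"
  shows "recode x 0 = tau" "recode x (Suc 0) = G" "recode x (Suc (Suc 0)) = G"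
    "shift 3 (recode x) = recode (shift 3 x)"
proof -
  have img: "recode x i = block_image KapKap (x 0) i" if "i < 3" for i
    using recode_in_block[of i x] b that by simp
  show "recode x 0 = tau" using img[of 0] by (simp add: block_image_def)
  show "recode x (Suc 0) = G" using img[of 1] by (simp add: block_image_def)
  show "recode x (Suc (Suc 0)) = G" using img[of 2] by (simp add: block_image_def numeral_2_eq_2)
  show "shift 3 (recode x) = recode (shift 3 x)" using shift_recode[of x] b by simp
qed

lemma kap_run_recode_TauRun:
  assumes b: "first_block x = TauRun r"
  shows "kap_run (recode x) (r - 2)"
proof -
  have "Suc (r - 2) = r - 1" "Suc (Suc (r - 2)) = r" using TauRun_D(4)[OF b] by arith+
  moreover have "\<forall>i. 1 \<le> i \<and> i \<le> r - 2 \<longrightarrow> recode x i = A"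
  proof (intro allI impI)
    fix i assume "1 \<le> i \<and> i \<le> r - 2"
    then have "1 \<le> i" "i + 2 \<le> r" using TauRun_D(4)[OF b] by arith+
    then show "recode x i = A" by (rule recode_TauRun(2)[OF b])
  qed
  ultimately show ?thesis using recode_TauRun[OF b] unfolding kap_run_def by simp
qed

lemma kap_run_recode_KapRun:
  assumes b: "first_block x = KapRun s"
  shows "kap_run (recode x) (s - 1)"
proof -
  have "Suc (s - 1) = s" using KapRun_D[OF b] by simp
  then show ?thesis using recode_KapRun[OF b] unfolding kap_run_def by simp
qed

lemma recode_const_run: "\<forall>i<m. x i = c \<Longrightarrow> i + 2 < m \<Longrightarrow> recode x i = c"
proof (induction i arbitrary: x m)
  case 0
  then have "first_block x = Letter" by (intro first_block_const[of x c]) auto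
  then show ?case using recode_Letter_0 0 by auto
next
  case (Suc i)
  then have b: "first_block x = Letter" by (intro first_block_const[of x c]) auto
  have "\<forall>j<m - 1. shift 1 x j = c" using Suc.prems(1) by auto
  then have "recode (shift 1 x) i = c" using Suc.IH Suc.prems(2) by simp
  then show ?case using recode_Letter_Suc[OF b] by simp
qed

lemma first_block_Letter_if_recode_const:
  assumes "recode x 0 = c" "recode x (Suc 0) = c" "recode x (Suc (Suc 0)) = c"
  shows "first_block x = Letter"
proof (cases "first_block x")
  case (TauRun r)
  have c: "c = kap" using recode_TauRun(1)[OF TauRun] assms by simp
  show ?thesis
  proof (cases "r = 2")
    case True
    then have "recode x (Suc (Suc 0)) = G" using recode_TauRun(4)[OF TauRun] by (simp add: numeral_2_eq_2)
    then show ?thesis using assms c kap_ne_G by simp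
  next
    case False
    then have "recode x (Suc 0) = A" using recode_TauRun(2)[OF TauRun, of 1] TauRun_D(4)[OF TauRun] by simp
    then show ?thesis using assms c kap_ne_A by simp
  qed
next
  case (KapRun s)
  then show ?thesis using recode_KapRun[OF KapRun] KapRun_D[OF KapRun] assms kap_ne_A kap_ne_G
    by (cases "s = 1") auto
next
  case KapKap
  then show ?thesis using recode_KapKap[OF KapKap] assms tau_ne_G by simp
qed simp

lemma const_run_if_recode_const: "\<forall>i<m. recode x i = c \<Longrightarrow> i + 2 < m \<Longrightarrow> x i = c"
proof (induction i arbitrary: x m)
  case 0
  then have "first_block x = Letter" by (intro first_block_Letter_if_recode_const) auto
  then show ?case using recode_Letter_0[of x] 0 by auto
next
  case (Suc i)
  then have b: "first_block x = Letter" by (intro first_block_Letter_if_recode_const) auto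
  have "\<forall>j<m - 1. recode (shift 1 x) j = c"
    using Suc.prems(1) recode_Letter_Suc[OF b] by (metis less_diff_conv Suc_eq_plus1)
  moreover have "i + 2 < m - 1" using Suc.prems(2) by arith
  ultimately have "shift 1 x i = c" by (rule Suc.IH)
  then show ?case by simp
qed

lemma recode_A_kap_G_D:
  "\<forall>i<j. recode w i = A \<Longrightarrow> recode w j = kap \<Longrightarrow> recode w (Suc j) = G \<Longrightarrow>
    (\<forall>i<j. w i = A) \<and> w j = kap \<and> w (Suc j) = G"
proof (induction j arbitrary: w)
  case 0
  show ?case
  proof (cases "first_block w")
    case (TauRun r)
    then have "recode w (Suc 0) \<in> {A, kap}"
      using recode_TauRun(2)[OF TauRun, of 1] recode_TauRun(3)[OF TauRun] TauRun_D(4)[OF TauRun] by (cases "r = 2") auto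
    then show ?thesis using 0 A_ne_G kap_ne_G by auto
  next
    case (KapRun s)
    then have "recode w (Suc 0) \<in> {A, kap}"
      using recode_KapRun(2)[OF KapRun, of 1] recode_KapRun(3)[OF KapRun] KapRun_D[OF KapRun] by (cases "s = 1") auto
    then show ?thesis using 0 A_ne_G kap_ne_G by auto
  next
    case KapKap then show ?thesis using recode_KapKap(1)[OF KapKap] 0 tau_ne_kap by simp
  next
    case Letter
    have "recode (shift 1 w) 0 = G" using 0 recode_Letter_Suc[OF Letter, of 0] by simp
    then show ?thesis using 0 recode_Letter_0[OF Letter] recode_0_eq_G_iff by simp
  qed
next
  case (Suc j)
  have a0: "recode w 0 = A" using Suc.prems(1) by simp
  show ?case
  proof (cases "first_block w")
    case (TauRun r) then show ?thesis using recode_TauRun(1)[OF TauRun] a0 kap_ne_A by simp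
  next
    case (KapRun s) then show ?thesis using recode_KapRun(1)[OF KapRun] a0 kap_ne_A by simp
  next
    case KapKap
    have "recode w (Suc 0) \<in> {A, kap}" using Suc.prems by (cases j) auto
    then show ?thesis using recode_KapKap(2)[OF KapKap] A_ne_G kap_ne_G by auto
  next
    case Letter
    have "\<forall>i<j. recode (shift 1 w) i = A" using Suc.prems(1) recode_Letter_Suc[OF Letter] by auto
    moreover have "recode (shift 1 w) j = kap" "recode (shift 1 w) (Suc j) = G"
      using Suc.prems(2,3) recode_Letter_Suc[OF Letter] by auto
    ultimately have "(\<forall>i<j. shift 1 w i = A) \<and> shift 1 w j = kap \<and> shift 1 w (Suc j) = G"
      by (rule Suc.IH)
    moreover have "w 0 = A" using a0 recode_Letter_0[OF Letter] by simp
    ultimately show ?thesis by (auto simp: less_Suc_eq_0_disj)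
  qed
qed

text \<open>Only \<open>TauRun\<close> and \<open>KapRun\<close> blocks are recoded into a \<open>\<kappa>\<close>-block; this is what makes the
  recoding injective.\<close>

lemma Letter_not_kap_run_recode:
  assumes b: "first_block y = Letter"
  shows "\<not> kap_run (recode y) s"
proof
  assume run: "kap_run (recode y) s"
  then have y0: "y 0 = kap" using recode_Letter_0[OF b] by (simp add: kap_run_def)
  have "\<forall>i<s. recode (shift 1 y) i = A"
  proof (intro allI impI)
    fix i assume "i < s"
    then show "recode (shift 1 y) i = A" using run recode_Letter_Suc[OF b, of i] unfolding kap_run_def by simp
  qed
  moreover have "recode (shift 1 y) s = kap" "recode (shift 1 y) (Suc s) = G"
    using run recode_Letter_Suc[OF b, of s] recode_Letter_Suc[OF b, of "Suc s"] unfolding kap_run_def by simp_all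
  ultimately have tail: "(\<forall>i<s. shift 1 y i = A) \<and> shift 1 y s = kap \<and> shift 1 y (Suc s) = G"
    by (rule recode_A_kap_G_D)
  have "kap_run y s" unfolding kap_run_def
  proof (intro conjI allI impI)
    fix i assume "1 \<le> i \<and> i \<le> s"
    then obtain i' where "i = Suc i'" "i' < s" by (cases i) auto
    then show "y i = A" using tail by simp
  qed (use y0 tail in simp_all)
  then show False using Letter_D[OF b] by blast
qed

end

lemma shift_Omega: "x \<in> Omega N k \<Longrightarrow> shift n x \<in> Omega N k"
proof -
  assume "x \<in> Omega N k"
  then obtain m where "\<forall>i\<ge>m. x i = k" "\<forall>i. x i \<in> Sig N" unfolding Omega_def by blast
  then have "\<forall>i\<ge>m. shift n x i = k" "\<forall>i. shift n x i \<in> Sig N" by simp_all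
  then show ?thesis unfolding Omega_def by blast
qed

lemma Omega_not_const: "x \<in> Omega N k \<Longrightarrow> c \<noteq> k \<Longrightarrow> \<exists>i. x (Suc i) \<noteq> c"
proof -
  assume "x \<in> Omega N k" "c \<noteq> k"
  then obtain n where "\<forall>i\<ge>n. x i = k" unfolding Omega_def by blast
  then have "x (Suc n) \<noteq> c" using \<open>c \<noteq> k\<close> by simp
  then show ?thesis by blast
qed

lemma Omega_not_run: "x \<in> Omega N k \<Longrightarrow> y \<in> Omega N k \<Longrightarrow> u \<noteq> v \<Longrightarrow> \<exists>i. (x (Suc i), y (Suc i)) \<noteq> (v, u)"
proof -
  assume "x \<in> Omega N k" "y \<in> Omega N k" "u \<noteq> v"
  then obtain n m where "\<forall>i\<ge>n. x i = k" "\<forall>i\<ge>m. y i = k" unfolding Omega_def by blast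
  then have "x (Suc (n + m)) = k" "y (Suc (n + m)) = k" by auto
  then show ?thesis using \<open>u \<noteq> v\<close> by (metis prod.inject)
qed

context recoding
begin

lemma tau_run_if_Omega:
  "x \<in> Omega N kap \<Longrightarrow> x 0 = tau \<Longrightarrow> x (Suc 0) = G \<Longrightarrow> x (Suc (Suc 0)) = G \<Longrightarrow> tau_run x"
  unfolding tau_run_def using Omega_not_const[of x N kap G] kap_ne_G by auto

lemma Letter_tau:
  "x \<in> Omega N kap \<Longrightarrow> first_block x = Letter \<Longrightarrow> x 0 = tau \<Longrightarrow> x (Suc 0) \<noteq> G \<or> x (Suc (Suc 0)) \<noteq> G"
  using tau_run_if_Omega Letter_D by blast

lemma same_first_block_agree:
  assumes "first_block x = first_block y" "x 0 = y 0"
  shows "agree_below x y (block_len (first_block x))"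
    "agree_below (recode x) (recode y) (block_len (first_block x))"
proof -
  show "agree_below (recode x) (recode y) (block_len (first_block x))"
    unfolding agree_below_def using recode_in_block[of _ x] recode_in_block[of _ y] assms by simp
  show "agree_below x y (block_len (first_block x))"
  proof (cases "first_block x")
    case (TauRun r)
    then have y: "first_block y = TauRun r" using assms by simp
    show ?thesis unfolding agree_below_def
    proof (intro allI impI)
      fix i assume "i < block_len (first_block x)"
      then have "i \<le> r" using TauRun by simp
      then show "x i = y i" using TauRun_D(1,2)[OF TauRun] TauRun_D(1,2)[OF y] by (cases i) auto
    qed
  next
    case (KapRun s)
    then show ?thesis using kap_runs_agree[of x s y] KapRun_D(1) assms(1) by simp
  next
    case KapKap
    then show ?thesis using kap_runs_agree[of x 0 y] KapKap_D assms(1) by simp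
  qed (use assms in \<open>simp add: agree_below_def\<close>)
qed

lemma recode_Letter_tau:
  assumes "y \<in> Omega N kap" "first_block y = Letter" "y 0 = tau"
  shows "recode y (Suc 0) \<noteq> G \<or> recode y (Suc (Suc 0)) \<noteq> G"
proof (cases "y (Suc 0) = G")
  case False
  then show ?thesis using recode_Letter_Suc[OF assms(2), of 0] recode_0_eq_G_iff[of "shift 1 y"] by simp
next
  case True
  then have "first_block (shift 1 y) = Letter" using first_block_Letter_other tau_ne_G kap_ne_G by simp
  moreover have "y (Suc (Suc 0)) \<noteq> G" using Letter_tau[OF assms] True by simp
  ultimately show ?thesis
    using recode_Letter_Suc[OF assms(2), of 1] recode_Letter_Suc[of "shift 1 y" 0]
      recode_0_eq_G_iff[of "shift 1 (shift 1 y)"] by (simp add: numeral_2_eq_2)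
qed

lemma recode_run_length:
  assumes run: "\<forall>i<t. p i = c" and stop: "p t \<noteq> c"
  obtains t' where "t - 2 \<le> t'" "t' \<le> t + 2" "\<forall>i<t'. recode p i = c" "recode p t' \<noteq> c"
proof -
  have not_all: "\<not> (\<forall>i<t + 3. recode p i = c)"
    using const_run_if_recode_const[of "t + 3" p c t] stop by auto
  then have "\<not> (\<forall>i. recode p i = c)" by blast
  then obtain t' where t': "\<forall>i<t'. recode p i = c" "recode p t' \<noteq> c" by (rule run_end)
  have "t' \<le> t + 2"
  proof (rule ccontr)
    assume "\<not> t' \<le> t + 2"
    then show False using t'(1) not_all by simp
  qed
  moreover have "t - 2 \<le> t'"
  proof (rule ccontr)
    assume "\<not> t - 2 \<le> t'"
    then have "t' + 2 < t" by simp
    then show False using recode_const_run[OF run] t'(2) by blast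
  qed
  ultimately show ?thesis using that t' by blast
qed

lemma recode_run_end:
  assumes "\<forall>i<m. p i = v \<and> q i = u" "(p m, q m) \<noteq> (v, u)"
  obtains j where "j \<le> m + 2" "(recode p j, recode q j) \<noteq> (v, u)"
proof -
  have "\<not> ((\<forall>j<m + 3. recode p j = v) \<and> (\<forall>j<m + 3. recode q j = u))"
    using const_run_if_recode_const[of "m + 3" p v m] const_run_if_recode_const[of "m + 3" q u m] assms(2)
    by auto
  then show ?thesis using that by fastforce
qed

end

text \<open>The properties shared by the moves out of \<open>Id\<close> of \<open>M\<close> and \<open>M'\<close>: \<open>\<gamma> = G\<close> is isolated,
  \<open>\<kappa>\<close> is double-maximal and \<open>A\<close> is minimal by the Boundary condition.\<close>

locale admissible_moves = recoding tau kap A G for tau kap A G +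
  fixes Q :: "int \<Rightarrow> int \<Rightarrow> tstate"
  assumes leaves_Id: "leaves_Id Q" and swap_symmetric: "swap_symmetric Q"
    and diag: "Q a a = Id" and St_ne: "Q a b = St u v \<Longrightarrow> u \<noteq> v"
    and G_isolated: "b \<noteq> G \<Longrightarrow> Q G b = Exit"
    and kap_maximal: "Q kap b = St u v \<Longrightarrow> v \<noteq> G"
    and A_minimal: "Q A b = St u v \<Longrightarrow> v \<noteq> A"
begin

lemma swap: "Q a b = St u v \<Longrightarrow> Q b a = St v u"
  using swap_symmetric diag unfolding swap_symmetric_def by (metis swap_state.simps(1) tstate.distinct(3))

lemma G_isolated': "a \<noteq> G \<Longrightarrow> Q a G = Exit"
  using G_isolated swap_symmetric unfolding swap_symmetric_def by (metis swap_state.simps(3))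

lemma T_of_swap_Q: "T_of Q y x = T_of Q x y"
  using T_of_swap[OF swap_symmetric] .

lemma T_of_le_tau_G:
  assumes x: "x \<in> Omega N kap" "first_block x = Letter" "x 0 = tau" and ne: "x 0 \<noteq> y 0"
    and q: "Q (x 0) (y 0) = St u G"
  shows "T_of Q x y \<le> enat 2"
proof -
  have "x (Suc 0) \<noteq> G \<or> x (Suc (Suc 0)) \<noteq> G" using Letter_tau x by blast
  then show ?thesis
  proof
    assume "x (Suc 0) \<noteq> G"
    then have "T_of Q x y \<le> enat (Suc 0)" using T_of_le_run_end_0[of x y Q 0, OF ne leaves_Id] q by simp
    then show ?thesis by (rule le_enat_trans) simp
  next
    assume "x (Suc (Suc 0)) \<noteq> G"
    then have "T_of Q x y \<le> enat (Suc 1)" using T_of_le_run_end_0[of x y Q 1, OF ne leaves_Id] q by simp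
    then show ?thesis by (simp add: numeral_2_eq_2)
  qed
qed

lemma T_of_le_G_tau:
  "y \<in> Omega N kap \<Longrightarrow> first_block y = Letter \<Longrightarrow> y 0 = tau \<Longrightarrow> x 0 \<noteq> y 0 \<Longrightarrow>
    Q (x 0) (y 0) = St G v \<Longrightarrow> T_of Q x y \<le> enat 2"
  using T_of_le_tau_G[of y N x v] swap T_of_swap_Q by metis

lemma T_of_le_Suc:
  assumes "agree_below x y q" "x q \<noteq> y q" "\<And>u v. Q (x q) (y q) = St u v \<Longrightarrow> v \<noteq> x (Suc q)"
  shows "T_of Q x y \<le> enat (Suc q)"
  using T_of_le_run_end[OF assms(1,2) leaves_Id, of 0] assms(3) by auto

text \<open>As \<open>A\<close> is minimal, \<open>\<kappa>\<close> maximal and \<open>G\<close> isolated, a pair that splits off inside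
  \<open>A\<^sup>j \<kappa> G\<close> dies within two letters.\<close>

lemma T_of_le_split_in_A_run:
  assumes w: "\<And>i. 1 \<le> i \<Longrightarrow> i \<le> j \<Longrightarrow> w i = A" "w (Suc j) = kap" "w (Suc (Suc j)) = G"
    and a: "agree_below w z q" "w q \<noteq> z q" "1 \<le> q" "q \<le> Suc (Suc j)"
  shows "T_of Q w z \<le> enat (Suc (Suc j))" "T_of Q w z \<le> enat (q + 2)"
proof -
  consider "q < j" | "q = j" | "q = Suc j" | "q = Suc (Suc j)" using a(4) by arith
  then have "T_of Q w z \<le> enat (min (Suc (Suc j)) (q + 2))"
  proof cases
    case 1
    have "T_of Q w z \<le> enat (Suc q)"
    proof (rule T_of_le_Suc[OF a(1,2)])
      show "v \<noteq> w (Suc q)" if "Q (w q) (z q) = St u v" for u v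
        using A_minimal[of "z q" u v] w(1)[of q] w(1)[of "Suc q"] a(3) 1 that by simp
    qed
    then show ?thesis by (rule le_enat_trans) (use 1 in simp)
  next
    case 2
    show ?thesis
    proof (cases "\<exists>u. Q (w q) (z q) = St u kap")
      case True
      then have "T_of Q w z \<le> enat (Suc q + 1)"
        using T_of_le_run_end[OF a(1,2) leaves_Id, of 1] w(3) 2 kap_ne_G by auto
      then show ?thesis using 2 by simp
    next
      case False
      then have "T_of Q w z \<le> enat (Suc q)" by (intro T_of_le_Suc[OF a(1,2)]) (use w(2) 2 in auto)
      then show ?thesis by (rule le_enat_trans) (use 2 in simp)
    qed
  next
    case 3
    have "T_of Q w z \<le> enat (Suc q)"
      by (rule T_of_le_Suc[OF a(1,2)]) (use kap_maximal w(2,3) 3 in auto)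
    then show ?thesis using 3 by simp
  next
    case 4
    have "T_of Q w z \<le> enat q"
      by (rule T_of_le_Exit[OF a(1,2)]) (use G_isolated w(3) a(2) 4 in simp)
    then show ?thesis using 4 by simp
  qed
  then show "T_of Q w z \<le> enat (Suc (Suc j))" "T_of Q w z \<le> enat (q + 2)"
    by (auto elim: le_enat_trans)
qed

lemma T_of_le_kap_start:
  assumes ne: "w 0 \<noteq> z 0" and not_A: "\<And>u. Q (w 0) (z 0) \<noteq> St u A"
    and w1: "w (Suc 0) = A \<or> (w (Suc 0) = kap \<and> w (Suc (Suc 0)) = G)"
  shows "T_of Q w z \<le> enat 2"
proof -
  have T1: "T_of Q w z \<le> enat (Suc 0)" if "\<And>u v. Q (w 0) (z 0) = St u v \<Longrightarrow> v \<noteq> w (Suc 0)"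
    using T_of_le_Suc[of w z 0] ne that by (simp add: agree_below_def)
  from w1 show ?thesis
  proof
    assume "w (Suc 0) = A"
    then have "T_of Q w z \<le> enat (Suc 0)" using T1 not_A by blast
    then show ?thesis by (rule le_enat_trans) simp
  next
    assume w12: "w (Suc 0) = kap \<and> w (Suc (Suc 0)) = G"
    show ?thesis
    proof (cases "\<exists>u. Q (w 0) (z 0) = St u kap")
      case True
      then have "T_of Q w z \<le> enat (Suc 1)"
        using T_of_le_run_end_0[of w z Q 1, OF ne leaves_Id] w12 kap_ne_G by auto
      then show ?thesis by (simp add: numeral_2_eq_2)
    next
      case False
      then have "T_of Q w z \<le> enat (Suc 0)" using T1 w12 by auto
      then show ?thesis by (rule le_enat_trans) simp
    qed
  qed
qed

lemma T_of_kap_runs_less: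
  assumes w: "kap_run w a" and z: "kap_run z b" and "a < b"
  shows "enat (Suc a) \<le> T_of Q w z" "T_of Q w z \<le> enat (Suc (Suc a))"
proof -
  have agree: "agree_below w z (Suc a)" unfolding agree_below_def
  proof (intro allI impI)
    fix i assume "i < Suc a"
    then show "w i = z i" using w z \<open>a < b\<close> unfolding kap_run_def by (cases i) auto
  qed
  then show "enat (Suc a) \<le> T_of Q w z" by (rule enat_le_T_of_agree)
  have wz: "w (Suc a) = kap" "z (Suc a) = A" "w (Suc (Suc a)) = G"
    using w z \<open>a < b\<close> unfolding kap_run_def by auto
  show "T_of Q w z \<le> enat (Suc (Suc a))"
  proof (rule T_of_le_Suc[OF agree])
    show "w (Suc a) \<noteq> z (Suc a)" using wz kap_ne_A by simp
    show "v \<noteq> w (Suc (Suc a))" if "Q (w (Suc a)) (z (Suc a)) = St u v" for u v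
      using kap_maximal that wz by simp
  qed
qed

lemma T_of_kap_runs:
  assumes "kap_run w a" "kap_run z b" "a \<noteq> b"
  shows "enat (Suc (min a b)) \<le> T_of Q w z" "T_of Q w z \<le> enat (Suc (Suc (min a b)))"
proof -
  have "enat (Suc (min a b)) \<le> T_of Q w z \<and> T_of Q w z \<le> enat (Suc (Suc (min a b)))"
  proof (cases "a < b")
    case True
    then show ?thesis using T_of_kap_runs_less[OF assms(1,2)] by simp
  next
    case False
    then have "b < a" using assms(3) by simp
    then show ?thesis using T_of_kap_runs_less[OF assms(2,1)] T_of_swap_Q[of w z] by simp
  qed
  then show "enat (Suc (min a b)) \<le> T_of Q w z" "T_of Q w z \<le> enat (Suc (Suc (min a b)))" by simp_all
qed

lemma T_of_le_G:
  assumes "agree_below x y q" "x q = G" "y q \<noteq> G"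
  shows "T_of Q x y \<le> enat q"
  using T_of_le_Exit[OF assms(1)] assms(2,3) G_isolated by simp

lemma T_of_le_GG:
  assumes "w 0 = z 0" "w (Suc 0) = G" "w (Suc (Suc 0)) = G" "z (Suc 0) \<noteq> G \<or> z (Suc (Suc 0)) \<noteq> G"
  shows "T_of Q w z \<le> enat 2"
proof (cases "z (Suc 0) = G")
  case False
  then have "T_of Q w z \<le> enat (Suc 0)" using T_of_le_G[of w z "Suc 0"] assms(1,2) by (simp add: agree_below_def)
  then show ?thesis by (rule le_enat_trans) simp
next
  case True
  then show ?thesis using T_of_le_G[of w z 2] assms by (simp add: agree_below_def numeral_2_eq_2 less_Suc_eq)
qed

lemma T_of_kap_run_A_run:
  assumes w: "kap_run w a" and z: "\<not> kap_run z a" "z 0 = kap" "\<forall>i<t. z (Suc i) = A" "z (Suc t) \<noteq> A"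
  shows "enat (Suc (min a t)) \<le> T_of Q w z" "T_of Q w z \<le> enat (min a t + 3)"
proof -
  have w0: "w 0 = kap" and wA: "\<And>i. 1 \<le> i \<Longrightarrow> i \<le> a \<Longrightarrow> w i = A"
    and w12: "w (Suc a) = kap" "w (Suc (Suc a)) = G" using w unfolding kap_run_def by auto
  have agree: "agree_below w z (Suc (min a t))" unfolding agree_below_def
  proof (intro allI impI)
    fix i assume "i < Suc (min a t)"
    then show "w i = z i" using w0 z(2,3) wA[of i] by (cases i) auto
  qed
  then show "enat (Suc (min a t)) \<le> T_of Q w z" by (rule enat_le_T_of_agree)
  have "\<not> agree_below w z (a + 3)" using kap_run_agree[OF w] z(1) by blast
  then obtain q where q: "q < a + 3" "agree_below w z q" "w q \<noteq> z q" by (rule first_difference)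
  have q1: "Suc (min a t) \<le> q"
  proof (rule ccontr)
    assume "\<not> Suc (min a t) \<le> q"
    then show False using agree q(3) unfolding agree_below_def by simp
  qed
  have bounds: "T_of Q w z \<le> enat (Suc (Suc a))" "T_of Q w z \<le> enat (q + 2)"
    using T_of_le_split_in_A_run[OF wA w12 q(2,3)] q1 q(1) by simp_all
  show "T_of Q w z \<le> enat (min a t + 3)"
  proof (cases "t < a")
    case True
    have "q \<le> Suc t"
    proof (rule ccontr)
      assume "\<not> q \<le> Suc t"
      then have "w (Suc t) = z (Suc t)" using q(2) unfolding agree_below_def by simp
      then show False using wA[of "Suc t"] z(4) True by simp
    qed
    then show ?thesis using bounds(2) True by (auto elim: le_enat_trans)
  next
    case False
    then show ?thesis using bounds(1) by (auto elim: le_enat_trans)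
  qed
qed

lemma T_of_kap_run_recode_Letter:
  assumes w: "kap_run w a" and y: "first_block y = Letter" "y 0 = kap"
    and run: "\<forall>i<t. y (Suc i) = A" and stop: "y (Suc t) \<noteq> A"
  shows "enat (Suc (min a (t - 2))) \<le> T_of Q w (recode y)"
    "T_of Q w (recode y) \<le> enat (min a (t + 2) + 3)"
proof -
  obtain t' where t': "t - 2 \<le> t'" "t' \<le> t + 2" "\<forall>i<t'. recode (shift 1 y) i = A"
    "recode (shift 1 y) t' \<noteq> A"
    using recode_run_length[of t "shift 1 y" A] run stop by auto
  have "enat (Suc (min a t')) \<le> T_of Q w (recode y)" "T_of Q w (recode y) \<le> enat (min a t' + 3)"
    using T_of_kap_run_A_run[OF w Letter_not_kap_run_recode[OF y(1)], of t'] t'(3,4)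
      recode_Letter_0[OF y(1)] recode_Letter_Suc[OF y(1)] y(2) by simp_all
  then show "enat (Suc (min a (t - 2))) \<le> T_of Q w (recode y)"
    "T_of Q w (recode y) \<le> enat (min a (t + 2) + 3)"
    using t'(1,2) by (auto elim!: order_trans[rotated] le_enat_trans simp: min_def)
qed

end

text \<open>In the application \<open>R\<close> and \<open>R'\<close> are the moves out of \<open>Id\<close> of \<open>M\<close> and \<open>M'\<close>, \<open>B\<close> is the
  label other than \<open>A\<close> and \<open>\<gamma>\<close>, and \<open>L\<close> is the set of the \<open>\<lambda>\<close> with \<open>\<lambda> \<triangleleft>\<^sub>A\<^sub>B \<kappa>\<close>; the
  simplification removes exactly the pairs \<open>(\<tau>, \<kappa>)\<close> and \<open>(\<tau>, \<lambda>)\<close>, \<open>\<lambda> \<in> L\<close>, and their reverses.\<close>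

locale recoding_setting = recoding tau kap A G + R: admissible_moves tau kap A G R for tau kap A G R +
  fixes R' :: "int \<Rightarrow> int \<Rightarrow> tstate" and B :: int and L :: "int set" and N :: nat
  assumes kap_A_predecessors: "R a kap = St A w \<Longrightarrow> a = tau \<or> a \<in> L"
    and tau_G_successors: "R tau b = St u G \<Longrightarrow> b = kap \<or> b \<in> L"
    and R_tau_kap: "R tau kap = St A G"
    and R_L_kap: "l \<in> L \<Longrightarrow> R l kap = St A B"
    and R_tau_L: "l \<in> L \<Longrightarrow> R tau l = St B G"
    and L_ne: "l \<in> L \<Longrightarrow> l \<noteq> tau \<and> l \<noteq> kap"
    and R'_eq: "R' a b =
      (if (a, b) \<in> insert (tau, kap) ({tau} \<times> L) \<or> (b, a) \<in> insert (tau, kap) ({tau} \<times> L) then Exit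
       else R a b)"
    and letters_in_Sig: "tau \<in> Sig N" "kap \<in> Sig N" "A \<in> Sig N" "G \<in> Sig N"
begin

abbreviation "Om \<equiv> Omega N kap"

lemma R'_eq_R:
  "\<not> (a = tau \<and> b = kap \<or> a = kap \<and> b = tau \<or> a = tau \<and> b \<in> L \<or> a \<in> L \<and> b = tau) \<Longrightarrow> R' a b = R a b"
  using R'_eq[of a b] by auto

lemma R'_Exit:
  "a = tau \<and> b = kap \<or> a = kap \<and> b = tau \<or> a = tau \<and> b \<in> L \<or> a \<in> L \<and> b = tau \<Longrightarrow> R' a b = Exit"
  using R'_eq[of a b] by auto

lemma R'_St_D: "R' a b = St u v \<Longrightarrow> R a b = St u v"
  using R'_eq[of a b] by (simp split: if_splits)

sublocale R': admissible_moves tau kap A G R'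
proof
  show "leaves_Id R'" using R.leaves_Id R'_eq unfolding leaves_Id_def by simp
  show "swap_symmetric R'" unfolding swap_symmetric_def
  proof (intro allI impI)
    fix a b :: int assume "a \<noteq> b"
    then have "R b a = swap_state (R a b)" using R.swap_symmetric unfolding swap_symmetric_def by blast
    then show "R' b a = swap_state (R' a b)" using R'_eq[of a b] R'_eq[of b a] by (simp split: if_splits)
  qed
  show "R' a a = Id" for a using R.diag[of a] R'_eq_R[of a a] tau_ne_kap L_ne by metis
  show "R' G b = Exit" if "b \<noteq> G" for b using R.G_isolated[OF that] R'_eq[of G b] by simp
  show "u \<noteq> v" if "R' a b = St u v" for a b u v using R.St_ne R'_St_D that by blast
  show "v \<noteq> G" if "R' kap b = St u v" for b u v using R.kap_maximal R'_St_D that by blast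
  show "v \<noteq> A" if "R' A b = St u v" for b u v using R.A_minimal R'_St_D that by blast
qed

lemma R_kap_not_A: "a \<noteq> tau \<Longrightarrow> a \<notin> L \<Longrightarrow> R kap a \<noteq> St u A"
  using kap_A_predecessors R.swap by blast

definition T_close :: "(nat \<Rightarrow> int) \<Rightarrow> (nat \<Rightarrow> int) \<Rightarrow> bool" where
  "T_close x y \<longleftrightarrow>
    T_of R x y \<le> T_of R' (recode x) (recode y) + 5 \<and> T_of R' (recode x) (recode y) \<le> T_of R x y + 5"

lemma T_closeI:
  assumes "T_of R x y \<le> enat a" "enat b \<le> T_of R x y"
    and "T_of R' (recode x) (recode y) \<le> enat c" "enat d \<le> T_of R' (recode x) (recode y)"
    and "a \<le> d + 5" "c \<le> b + 5"
  shows "T_close x y"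
proof -
  have "T_of R x y \<le> enat (d + 5)" using assms(1,5) by (rule le_enat_trans)
  also have "\<dots> \<le> T_of R' (recode x) (recode y) + 5"
    using add_right_mono[OF assms(4), of 5] by (simp add: numeral_eq_enat)
  finally have "T_of R x y \<le> T_of R' (recode x) (recode y) + 5" .
  moreover have "T_of R' (recode x) (recode y) \<le> enat (b + 5)" using assms(3,6) by (rule le_enat_trans)
  moreover have "\<dots> \<le> T_of R x y + 5" using add_right_mono[OF assms(2), of 5] by (simp add: numeral_eq_enat)
  ultimately show ?thesis unfolding T_close_def by (blast intro: order_trans)
qed

lemma T_close_small:
  "T_of R x y \<le> enat a \<Longrightarrow> T_of R' (recode x) (recode y) \<le> enat c \<Longrightarrow> a \<le> 5 \<Longrightarrow> c \<le> 5 \<Longrightarrow> T_close x y"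
  by (rule T_closeI[of x y a 0 c 0]) (auto simp: zero_enat_def[symmetric])

lemma T_close_swap: "T_close x y \<Longrightarrow> T_close y x"
  unfolding T_close_def using R.T_of_swap_Q R'.T_of_swap_Q by simp

lemma T_of_R'_removed:
  assumes "w 0 = tau \<and> z 0 = kap \<or> w 0 = kap \<and> z 0 = tau \<or> w 0 = tau \<and> z 0 \<in> L \<or> w 0 \<in> L \<and> z 0 = tau"
  shows "T_of R' w z \<le> enat 0"
proof (rule T_of_le_Exit_0)
  show "w 0 \<noteq> z 0" using assms tau_ne_kap by (auto dest: L_ne)
  show "R' (w 0) (z 0) = Exit" using assms by (rule R'_Exit)
qed

lemma kap_run_Suc_0: "kap_run w a \<Longrightarrow> w (Suc 0) = A \<or> w (Suc 0) = kap \<and> w (Suc (Suc 0)) = G"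
  unfolding kap_run_def by (cases a) auto

lemma T_of_tau_other:
  assumes "leaves_Id Q" "\<And>a b u v. Q a b = St u v \<Longrightarrow> R a b = St u v"
    and "w 0 = tau" "w (Suc 0) = G" "z 0 \<noteq> kap" "z 0 \<noteq> tau" "z 0 \<notin> L"
  shows "T_of Q w z \<le> enat (Suc 0)"
proof -
  have "\<forall>u v. Q (w 0) (z 0) = St u v \<longrightarrow> (w (Suc 0), z (Suc 0)) \<noteq> (v, u)"
    using assms(2-7) tau_G_successors by fastforce
  then show ?thesis using T_of_le_run_end_0[of w z Q 0] assms(1,3,6) by simp
qed

lemma T_of_R'_kap_other:
  assumes "kap_run w a" "z 0 \<noteq> kap" "z 0 \<noteq> tau" "z 0 \<notin> L"
  shows "T_of R' w z \<le> enat 2"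
proof (rule R'.T_of_le_kap_start)
  have "w 0 = kap" using assms(1) unfolding kap_run_def by blast
  then show "w 0 \<noteq> z 0" using assms(2) by simp
  show "R' (w 0) (z 0) \<noteq> St u A" for u
    using \<open>w 0 = kap\<close> assms(3,4) R_kap_not_A R'_St_D by metis
qed (rule kap_run_Suc_0[OF assms(1)])

lemma T_of_kap_run_recode_L:
  assumes w: "kap_run w a" and y: "first_block y = Letter" "y 0 \<in> L"
    and run: "\<forall>i<t. y (Suc i) = B" and t: "t \<le> a + 2" "y (Suc t) \<noteq> B \<or> a \<le> t + 2"
  shows "enat (Suc (t - 2)) \<le> T_of R' w (recode y)" "T_of R' w (recode y) \<le> enat (t + 3)"
proof -
  have w0: "w 0 = kap" and wA: "\<And>i. 1 \<le> i \<Longrightarrow> i \<le> a \<Longrightarrow> w i = A" and w1: "w (Suc a) = kap"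
    using w unfolding kap_run_def by auto
  have y0: "recode y 0 = y 0" and sy: "\<And>i. recode y (Suc i) = recode (shift 1 y) i"
    using recode_Letter_0[OF y(1)] recode_Letter_Suc[OF y(1)] by auto
  have ne: "w 0 \<noteq> recode y 0" using w0 y0 L_ne[OF y(2)] by simp
  have R'wy: "R' (w 0) (recode y 0) = St B A"
    using R'_eq_R[of kap "y 0"] R.swap[OF R_L_kap[OF y(2)]] w0 y0 L_ne[OF y(2)] tau_ne_kap by auto
  have yB: "\<forall>i<t. shift 1 y i = B" using run by simp
  show "enat (Suc (t - 2)) \<le> T_of R' w (recode y)"
  proof (rule enat_le_T_of_run_0[of w "recode y" R' B A, OF ne R'wy])
    show "\<forall>i. 1 \<le> i \<and> i \<le> t - 2 \<longrightarrow> w i = A \<and> recode y i = B"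
    proof (intro allI impI)
      fix i assume i: "1 \<le> i \<and> i \<le> t - 2"
      then obtain i' where i': "i = Suc i'" "i' + 2 < t" by (cases i) auto
      have "recode (shift 1 y) i' = B" by (rule recode_const_run[OF yB i'(2)])
      then have "recode y i = B" using sy[of i'] i'(1) by (simp only:)
      moreover have "i \<le> a" using i t(1) by arith
      ultimately show "w i = A \<and> recode y i = B" using wA[of i] i by simp
    qed
  qed
  show "T_of R' w (recode y) \<le> enat (t + 3)"
  proof (cases "a \<le> t + 2")
    case True
    have "T_of R' w (recode y) \<le> enat (Suc a)"
      using T_of_le_run_end_0[of w "recode y" R' a] ne R'.leaves_Id R'wy w1 kap_ne_A by simp
    then show ?thesis by (rule le_enat_trans) (use True in simp)
  next
    case False
    then have "y (Suc t) \<noteq> B" using t(2) by simp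
    then obtain j where j: "j \<le> t + 2" "recode (shift 1 y) j \<noteq> B"
      using recode_run_end[of t "shift 1 y" "B" "shift 1 y" "B"] yB by auto
    have "T_of R' w (recode y) \<le> enat (Suc j)"
      using T_of_le_run_end_0[of w "recode y" R' j] ne R'.leaves_Id R'wy j(2) sy by simp
    then show ?thesis by (rule le_enat_trans) (use j in simp)
  qed
qed

lemma T_close_TauRun_TauRun:
  assumes x: "first_block x = TauRun r" and y: "first_block y = TauRun r'" and "r < r'"
  shows "T_close x y"
proof -
  have r2: "2 \<le> r" by (rule TauRun_D(4)[OF x])
  have agree: "agree_below x y (Suc r)" unfolding agree_below_def
  proof (intro allI impI)
    fix i assume "i < Suc r"
    then show "x i = y i" using TauRun_D(1,2)[OF x] TauRun_D(1,2)[OF y] \<open>r < r'\<close> by (cases i) auto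
  qed
  have "T_of R x y \<le> enat (Suc r)"
    using T_of_le_Exit[OF agree] TauRun_D(3)[OF x] TauRun_D(2)[OF y, of "Suc r"] \<open>r < r'\<close> R.G_isolated'
    by simp
  moreover have "enat (Suc r) \<le> T_of R x y" using agree by (rule enat_le_T_of_agree)
  moreover have "T_of R' (recode x) (recode y) \<le> enat (Suc (Suc (r - 2)))"
    "enat (Suc (r - 2)) \<le> T_of R' (recode x) (recode y)"
    using R'.T_of_kap_runs[OF kap_run_recode_TauRun[OF x] kap_run_recode_TauRun[OF y]] \<open>r < r'\<close> r2
    by auto
  ultimately show ?thesis by (rule T_closeI) (use r2 in simp_all)
qed

lemma T_of_tau_kap:
  assumes x: "x 0 = tau" "\<forall>i<r. x (Suc i) = G" "x (Suc r) \<noteq> G"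
    and y: "y 0 = kap" "\<forall>i<t. y (Suc i) = A" "y (Suc t) \<noteq> A"
  shows "T_of R x y = enat (Suc (min r t))"
  by (rule T_of_eq_run_0[OF _ R.leaves_Id, of _ _ A G]) (use x y R_tau_kap tau_ne_kap in \<open>auto simp: min_def\<close>)

lemma TauRun_run: "first_block x = TauRun r \<Longrightarrow> \<forall>i<r. x (Suc i) = G"
  using TauRun_D(2) by simp

lemma T_close_TauRun_KapRun:
  assumes x: "first_block x = TauRun r" and y: "first_block y = KapRun s"
  shows "T_close x y"
proof -
  have r2: "2 \<le> r" by (rule TauRun_D(4)[OF x])
  have s1: "1 \<le> s" by (rule KapRun_D(2)[OF y])
  have y_run: "y 0 = kap" "\<forall>i<s. y (Suc i) = A" "y (Suc s) \<noteq> A"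
    using KapRun_D(1)[OF y] kap_ne_A unfolding kap_run_def by auto
  have T: "T_of R x y = enat (Suc (min r s))"
    using T_of_tau_kap[OF TauRun_D(1)[OF x] TauRun_run[OF x] TauRun_D(3)[OF x] y_run] .
  have kx: "kap_run (recode x) (r - 2)" and ky: "kap_run (recode y) (s - 1)"
    using kap_run_recode_TauRun[OF x] kap_run_recode_KapRun[OF y] .
  show ?thesis
  proof (cases "r - 2 = s - 1")
    case True
    then have rs: "r = Suc s" using r2 s1 by arith
    have agree: "agree_below (recode x) (recode y) (Suc r)"
      using kap_runs_agree[OF kx] ky True r2 by (metis Suc_diff_Suc add_2_eq_Suc' add_Suc_right
          le_add_diff_inverse2 numeral_3_eq_3 numeral_2_eq_2)
    have "T_of R' (recode x) (recode y) \<le> enat (Suc r)"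
    proof (rule T_of_le_Exit[OF agree])
      show "recode x (Suc r) \<noteq> recode y (Suc r)" "R' (recode x (Suc r)) (recode y (Suc r)) = Exit"
        using recode_TauRun(5)[OF x] recode_KapRun(5)[OF y] rs R'.G_isolated' by simp_all
    qed
    moreover have "enat (Suc r) \<le> T_of R' (recode x) (recode y)" using agree by (rule enat_le_T_of_agree)
    ultimately show ?thesis
      by (intro T_closeI[of x y "Suc (min r s)" "Suc (min r s)" "Suc r" "Suc r"]) (use T rs in simp_all)
  next
    case False
    then show ?thesis using R'.T_of_kap_runs[OF kx ky False] T
      by (intro T_closeI[of x y "Suc (min r s)" "Suc (min r s)" "Suc (Suc (min (r - 2) (s - 1)))"
          "Suc (min (r - 2) (s - 1))"]) simp_all
  qed
qed

lemma T_close_TauRun_KapKap: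
  assumes x: "first_block x = TauRun r" and y: "first_block y = KapKap"
  shows "T_close x y"
proof (rule T_close_small)
  have y01: "y 0 = kap" "y (Suc 0) = kap" using KapKap_D[OF y] unfolding kap_run_def by auto
  show "T_of R x y \<le> enat (Suc 0)"
    using T_of_le_run_end_0[of x y R 0, OF _ R.leaves_Id] R_tau_kap TauRun_D(1)[OF x] y01 tau_ne_kap kap_ne_A
    by simp
  show "T_of R' (recode x) (recode y) \<le> enat 0"
    using recode_TauRun(1)[OF x] recode_KapKap(1)[OF y] by (intro T_of_R'_removed) simp
qed simp_all

lemma T_close_TauRun_Letter_tau:
  assumes y_Om: "y \<in> Om" and x: "first_block x = TauRun r" and y: "first_block y = Letter" "y 0 = tau"
  shows "T_close x y"
proof (rule T_close_small)
  show "T_of R x y \<le> enat 2"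
    using R.T_of_le_GG[of x y] TauRun_D(1,2,4)[OF x] y(2) Letter_tau[OF y_Om y] by simp
  show "T_of R' (recode x) (recode y) \<le> enat 0"
    using recode_TauRun(1)[OF x] recode_Letter_0[OF y(1)] y(2) by (intro T_of_R'_removed) simp
qed simp_all

lemma T_close_TauRun_Letter_other:
  assumes x: "first_block x = TauRun r" and y: "first_block y = Letter" "y 0 \<noteq> kap" "y 0 \<noteq> tau" "y 0 \<notin> L"
  shows "T_close x y"
proof (rule T_close_small)
  show "T_of R x y \<le> enat (Suc 0)"
    using T_of_tau_other[of R x y] R.leaves_Id TauRun_D(1,2,4)[OF x] y(2-4) by simp
  show "T_of R' (recode x) (recode y) \<le> enat 2"
    using T_of_R'_kap_other[OF kap_run_recode_TauRun[OF x]] recode_Letter_0[OF y(1)] y(2-4) by simp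
qed simp_all

lemma T_close_TauRun_Letter_L:
  assumes x: "first_block x = TauRun r" and y: "first_block y = Letter" "y 0 \<in> L"
  shows "T_close x y"
proof -
  have r2: "2 \<le> r" by (rule TauRun_D(4)[OF x])
  obtain t where t: "t \<le> r" "\<forall>i<t. y (Suc i) = B" "y (Suc t) \<noteq> B \<or> t = r"
    and T: "T_of R x y = enat (Suc t)"
    using T_of_eq_run_truncated[OF _ R.leaves_Id, of x y B G r] TauRun_D(1,3)[OF x] TauRun_run[OF x]
      R_tau_L[OF y(2)] L_ne[OF y(2)] by auto
  have "t \<le> r - 2 + 2" "y (Suc t) \<noteq> B \<or> r - 2 \<le> t + 2" using t(1,3) r2 by auto
  then have "enat (Suc (t - 2)) \<le> T_of R' (recode x) (recode y)" "T_of R' (recode x) (recode y) \<le> enat (t + 3)"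
    using T_of_kap_run_recode_L[OF kap_run_recode_TauRun[OF x] y t(2)] by blast+
  then show ?thesis using T by (intro T_closeI[of x y "Suc t" "Suc t" "t + 3" "Suc (t - 2)"]) simp_all
qed

lemma T_close_TauRun_Letter_kap:
  assumes y_Om: "y \<in> Om" and x: "first_block x = TauRun r" and y: "first_block y = Letter" "y 0 = kap"
  shows "T_close x y"
proof -
  have r2: "2 \<le> r" by (rule TauRun_D(4)[OF x])
  have "\<not> (\<forall>i. y (Suc i) = A)" using Omega_not_const[OF y_Om] kap_ne_A by auto
  then obtain t where t: "\<forall>i<t. y (Suc i) = A" "y (Suc t) \<noteq> A" by (rule run_end)
  have T: "T_of R x y = enat (Suc (min r t))"
    using T_of_tau_kap[OF TauRun_D(1)[OF x] TauRun_run[OF x] TauRun_D(3)[OF x] y(2) t] .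
  have "enat (Suc (min (r - 2) (t - 2))) \<le> T_of R' (recode x) (recode y)"
    "T_of R' (recode x) (recode y) \<le> enat (min (r - 2) (t + 2) + 3)"
    using R'.T_of_kap_run_recode_Letter[OF kap_run_recode_TauRun[OF x] y t] by simp_all
  then show ?thesis using T r2
    by (intro T_closeI[of x y "Suc (min r t)" "Suc (min r t)" "min (r - 2) (t + 2) + 3"
        "Suc (min (r - 2) (t - 2))"]) simp_all
qed

lemma T_close_TauRun_Letter:
  assumes "y \<in> Om" "first_block x = TauRun r" "first_block y = Letter"
  shows "T_close x y"
  using T_close_TauRun_Letter_tau[OF assms] T_close_TauRun_Letter_kap[OF assms]
    T_close_TauRun_Letter_L[OF assms(2,3)] T_close_TauRun_Letter_other[OF assms(2,3)] by blast

lemma T_close_KapRun_KapRun: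
  assumes x: "first_block x = KapRun s" and y: "first_block y = KapRun s'" and "s < s'"
  shows "T_close x y"
proof -
  have "s \<noteq> s'" "s - 1 \<noteq> s' - 1" using \<open>s < s'\<close> KapRun_D(2)[OF x] by auto
  then show ?thesis
    using R.T_of_kap_runs[OF KapRun_D(1)[OF x] KapRun_D(1)[OF y]]
      R'.T_of_kap_runs[OF kap_run_recode_KapRun[OF x] kap_run_recode_KapRun[OF y]] \<open>s < s'\<close>
    by (intro T_closeI[of x y "Suc (Suc s)" "Suc s" "Suc (Suc (s - 1))" "Suc (s - 1)"]) simp_all
qed

lemma T_close_KapRun_KapKap:
  assumes x: "first_block x = KapRun s" and y: "first_block y = KapKap"
  shows "T_close x y"
proof (rule T_close_small)
  have "s \<noteq> 0" using KapRun_D(2)[OF x] by simp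
  then show "T_of R x y \<le> enat (Suc (Suc 0))"
    using R.T_of_kap_runs(2)[OF KapRun_D(1)[OF x] KapKap_D[OF y]] by simp
  show "T_of R' (recode x) (recode y) \<le> enat 0"
    using recode_KapRun(1)[OF x] recode_KapKap(1)[OF y] by (intro T_of_R'_removed) simp
qed simp_all

lemma T_close_KapRun_Letter_tau:
  assumes y_Om: "y \<in> Om" and x: "first_block x = KapRun s" and y: "first_block y = Letter" "y 0 = tau"
  shows "T_close x y"
proof (rule T_close_small)
  have x0: "x 0 = kap" using KapRun_D(1)[OF x] by (simp add: kap_run_def)
  then show "T_of R x y \<le> enat 2"
    using R.T_of_le_G_tau[OF y_Om y, of x A] R.swap[OF R_tau_kap] y(2) tau_ne_kap by simp
  show "T_of R' (recode x) (recode y) \<le> enat 0"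
    using recode_KapRun(1)[OF x] recode_Letter_0[OF y(1)] y(2) by (intro T_of_R'_removed) simp
qed simp_all

lemma T_close_KapRun_Letter_other:
  assumes x: "first_block x = KapRun s" and y: "first_block y = Letter" "y 0 \<noteq> kap" "y 0 \<noteq> tau" "y 0 \<notin> L"
  shows "T_close x y"
proof (rule T_close_small)
  have x0: "x 0 = kap" using KapRun_D(1)[OF x] by (simp add: kap_run_def)
  show "T_of R x y \<le> enat 2"
  proof (rule R.T_of_le_kap_start)
    show "x 0 \<noteq> y 0" "R (x 0) (y 0) \<noteq> St u A" for u using x0 y(2-4) R_kap_not_A by auto
  qed (rule kap_run_Suc_0[OF KapRun_D(1)[OF x]])
  show "T_of R' (recode x) (recode y) \<le> enat 2"
    using T_of_R'_kap_other[OF kap_run_recode_KapRun[OF x]] recode_Letter_0[OF y(1)] y(2-4) by simp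
qed simp_all

lemma T_close_KapRun_Letter_L:
  assumes x: "first_block x = KapRun s" and y: "first_block y = Letter" "y 0 \<in> L"
  shows "T_close x y"
proof -
  have s1: "1 \<le> s" by (rule KapRun_D(2)[OF x])
  have x_run: "x 0 = kap" "\<forall>i<s. x (Suc i) = A" "x (Suc s) \<noteq> A"
    using KapRun_D(1)[OF x] kap_ne_A unfolding kap_run_def by auto
  obtain t where t: "t \<le> s" "\<forall>i<t. y (Suc i) = B" "y (Suc t) \<noteq> B \<or> t = s"
    and T: "T_of R x y = enat (Suc t)"
    using T_of_eq_run_truncated[OF _ R.leaves_Id, of x y B A s] x_run R.swap[OF R_L_kap[OF y(2)]] L_ne[OF y(2)]
    by auto
  have "t \<le> s - 1 + 2" "y (Suc t) \<noteq> B \<or> s - 1 \<le> t + 2" using t(1,3) by auto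
  then have "enat (Suc (t - 2)) \<le> T_of R' (recode x) (recode y)" "T_of R' (recode x) (recode y) \<le> enat (t + 3)"
    using T_of_kap_run_recode_L[OF kap_run_recode_KapRun[OF x] y t(2)] by blast+
  then show ?thesis using T by (intro T_closeI[of x y "Suc t" "Suc t" "t + 3" "Suc (t - 2)"]) simp_all
qed

lemma T_close_KapRun_Letter_kap:
  assumes y_Om: "y \<in> Om" and x: "first_block x = KapRun s" and y: "first_block y = Letter" "y 0 = kap"
  shows "T_close x y"
proof -
  have "\<not> (\<forall>i. y (Suc i) = A)" using Omega_not_const[OF y_Om] kap_ne_A by auto
  then obtain t where t: "\<forall>i<t. y (Suc i) = A" "y (Suc t) \<noteq> A" by (rule run_end)
  have "enat (Suc (min s t)) \<le> T_of R x y" "T_of R x y \<le> enat (min s t + 3)"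
    using R.T_of_kap_run_A_run[OF KapRun_D(1)[OF x] Letter_D(2)[OF y(1)] y(2) t] by simp_all
  moreover have "enat (Suc (min (s - 1) (t - 2))) \<le> T_of R' (recode x) (recode y)"
    "T_of R' (recode x) (recode y) \<le> enat (min (s - 1) (t + 2) + 3)"
    using R'.T_of_kap_run_recode_Letter[OF kap_run_recode_KapRun[OF x] y t] by simp_all
  ultimately show ?thesis
    by (intro T_closeI[of x y "min s t + 3" "Suc (min s t)" "min (s - 1) (t + 2) + 3"
        "Suc (min (s - 1) (t - 2))"]) simp_all
qed

lemma T_close_KapRun_Letter:
  assumes "y \<in> Om" "first_block x = KapRun s" "first_block y = Letter"
  shows "T_close x y"
  using T_close_KapRun_Letter_tau[OF assms] T_close_KapRun_Letter_kap[OF assms]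
    T_close_KapRun_Letter_L[OF assms(2,3)] T_close_KapRun_Letter_other[OF assms(2,3)] by blast

lemma T_close_KapKap_Letter:
  assumes y_Om: "y \<in> Om" and x: "first_block x = KapKap" and y: "first_block y = Letter"
  shows "T_close x y"
proof -
  have kx: "kap_run x 0" by (rule KapKap_D[OF x])
  have x01: "x 0 = kap" "x (Suc 0) = kap" "x (Suc (Suc 0)) = G" using kx unfolding kap_run_def by auto
  note rx = recode_KapKap[OF x]
  have ry0: "recode y 0 = y 0" by (rule recode_Letter_0[OF y])
  consider "y 0 = tau" | "y 0 = kap" | "y 0 \<in> L" | "y 0 \<noteq> kap" "y 0 \<noteq> tau" "y 0 \<notin> L" by blast
  then show ?thesis
  proof cases
    case 1
    have "T_of R x y \<le> enat (Suc 0)"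
      using T_of_le_run_end_0[of x y R 0] R.leaves_Id R.swap[OF R_tau_kap] x01 1 tau_ne_kap kap_ne_A by simp
    moreover have "T_of R' (recode x) (recode y) \<le> enat 2"
      using R'.T_of_le_GG[of "recode x" "recode y"] rx(1,2,3) ry0 1 recode_Letter_tau[OF y_Om y 1] by simp
    ultimately show ?thesis by (rule T_close_small) simp_all
  next
    case 2
    have "\<not> (\<forall>i. y (Suc i) = A)" using Omega_not_const[OF y_Om] kap_ne_A by auto
    then obtain t where t: "\<forall>i<t. y (Suc i) = A" "y (Suc t) \<noteq> A" by (rule run_end)
    have "T_of R x y \<le> enat 3"
      using R.T_of_kap_run_A_run(2)[OF kx Letter_D(2)[OF y] 2 t] by simp
    moreover have "T_of R' (recode x) (recode y) \<le> enat 0"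
      using rx(1) ry0 2 by (intro T_of_R'_removed) simp
    ultimately show ?thesis by (rule T_close_small) simp_all
  next
    case 3
    have "T_of R x y \<le> enat (Suc 0)"
      using T_of_le_run_end_0[of x y R 0] R.leaves_Id R.swap[OF R_L_kap[OF 3]] x01 L_ne[OF 3] kap_ne_A by simp
    moreover have "T_of R' (recode x) (recode y) \<le> enat 0"
      using rx(1) ry0 3 by (intro T_of_R'_removed) simp
    ultimately show ?thesis by (rule T_close_small) simp_all
  next
    case 4
    have "T_of R x y \<le> enat 2"
    proof (rule R.T_of_le_kap_start)
      show "x 0 \<noteq> y 0" "R (x 0) (y 0) \<noteq> St u A" for u using x01 4 R_kap_not_A by auto
    qed (rule kap_run_Suc_0[OF kx])
    moreover have "T_of R' (recode x) (recode y) \<le> enat (Suc 0)"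
      using T_of_tau_other[of R' "recode x" "recode y"] R'.leaves_Id R'_St_D rx(1,2) ry0 4 by simp
    ultimately show ?thesis by (rule T_close_small) simp_all
  qed
qed

lemma T_close_Letter_Letter_removed:
  assumes x_Om: "x \<in> Om" and y_Om: "y \<in> Om" and x: "first_block x = Letter" and y: "first_block y = Letter"
    and removed: "x 0 = tau \<and> y 0 = kap \<or> x 0 = kap \<and> y 0 = tau \<or> x 0 = tau \<and> y 0 \<in> L \<or> x 0 \<in> L \<and> y 0 = tau"
  shows "T_close x y"
proof (rule T_close_small)
  have ne: "x 0 \<noteq> y 0" using removed tau_ne_kap by (auto dest: L_ne)
  from removed show "T_of R x y \<le> enat 2"
  proof (elim disjE)
    assume "x 0 = tau \<and> y 0 = kap" then show ?thesis using R.T_of_le_tau_G[of x N y A] x_Om x ne R_tau_kap by simp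
  next
    assume "x 0 = kap \<and> y 0 = tau" then show ?thesis using R.T_of_le_G_tau[of y N x A] y_Om y ne R.swap[OF R_tau_kap] by simp
  next
    assume "x 0 = tau \<and> y 0 \<in> L" then show ?thesis using R.T_of_le_tau_G[of x N y B] x_Om x ne R_tau_L by simp
  next
    assume "x 0 \<in> L \<and> y 0 = tau" then show ?thesis using R.T_of_le_G_tau[of y N x B] y_Om y ne R.swap[OF R_tau_L] by simp
  qed
  show "T_of R' (recode x) (recode y) \<le> enat 0"
    using removed recode_Letter_0[OF x] recode_Letter_0[OF y] by (intro T_of_R'_removed) simp
qed simp_all

lemma T_close_Letter_Letter_kept:
  assumes x_Om: "x \<in> Om" and y_Om: "y \<in> Om" and x: "first_block x = Letter" and y: "first_block y = Letter"
    and ne: "x 0 \<noteq> y 0" and kept: "R' (x 0) (y 0) = R (x 0) (y 0)"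
  shows "T_close x y"
proof -
  have rx0: "recode x 0 = x 0" and ry0: "recode y 0 = y 0" using recode_Letter_0 x y by auto
  have rne: "recode x 0 \<noteq> recode y 0" using rx0 ry0 ne by simp
  have sx: "\<And>i. recode x (Suc i) = recode (shift 1 x) i" and sy: "\<And>i. recode y (Suc i) = recode (shift 1 y) i"
    using recode_Letter_Suc[OF x] recode_Letter_Suc[OF y] by auto
  show ?thesis
  proof (cases "R (x 0) (y 0)")
    case Id then show ?thesis using R.leaves_Id ne unfolding leaves_Id_def by blast
  next
    case Exit
    have "T_of R x y \<le> enat 0" using T_of_le_Exit_0[of x y R] ne Exit by simp
    moreover have "T_of R' (recode x) (recode y) \<le> enat 0"
      using T_of_le_Exit_0[of "recode x" "recode y" R'] rne kept Exit rx0 ry0 by simp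
    ultimately show ?thesis by (rule T_close_small) simp_all
  next
    case (St u v)
    have "\<not> (\<forall>i. x (Suc i) = v \<and> y (Suc i) = u)" using Omega_not_run[OF x_Om y_Om R.St_ne[OF St]] by auto
    then obtain m where m: "\<forall>i<m. x (Suc i) = v \<and> y (Suc i) = u" "(x (Suc m), y (Suc m)) \<noteq> (v, u)"
      using run_end[of "\<lambda>i. x (Suc i) = v \<and> y (Suc i) = u"] by auto
    have T: "T_of R x y = enat (Suc m)" by (rule T_of_eq_run_0[of x y R u v m, OF ne R.leaves_Id St m])
    have runs: "\<forall>i<m. shift 1 x i = v \<and> shift 1 y i = u" "(shift 1 x m, shift 1 y m) \<noteq> (v, u)" using m by simp_all
    have R'xy: "R' (recode x 0) (recode y 0) = St u v" using kept St rx0 ry0 by simp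
    have "enat (Suc (m - 2)) \<le> T_of R' (recode x) (recode y)"
    proof (rule enat_le_T_of_run_0[of "recode x" "recode y" R' u v, OF rne R'xy])
      show "\<forall>i. 1 \<le> i \<and> i \<le> m - 2 \<longrightarrow> recode x i = v \<and> recode y i = u"
      proof (intro allI impI)
        fix i assume "1 \<le> i \<and> i \<le> m - 2"
        then obtain i' where i': "i = Suc i'" "i' + 2 < m" by (cases i) auto
        then show "recode x i = v \<and> recode y i = u"
          using recode_const_run[of m "shift 1 x" v i'] recode_const_run[of m "shift 1 y" u i'] runs(1) sx sy
          by simp
      qed
    qed
    moreover obtain j where j: "j \<le> m + 2" "(recode (shift 1 x) j, recode (shift 1 y) j) \<noteq> (v, u)"
      using recode_run_end[OF runs] by blast
    have "T_of R' (recode x) (recode y) \<le> enat (Suc j)"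
      using T_of_le_run_end_0[of "recode x" "recode y" R' j] rne R'.leaves_Id R'xy j(2) sx sy by simp
    then have "T_of R' (recode x) (recode y) \<le> enat (m + 3)" by (rule le_enat_trans) (use j(1) in simp)
    ultimately show ?thesis using T
      by (intro T_closeI[of x y "Suc m" "Suc m" "m + 3" "Suc (m - 2)"]) simp_all
  qed
qed

lemma T_close_Letter_Letter:
  assumes "x \<in> Om" "y \<in> Om" "first_block x = Letter" "first_block y = Letter" "x 0 \<noteq> y 0"
  shows "T_close x y"
proof (cases "x 0 = tau \<and> y 0 = kap \<or> x 0 = kap \<and> y 0 = tau \<or> x 0 = tau \<and> y 0 \<in> L \<or> x 0 \<in> L \<and> y 0 = tau")
  case True
  then show ?thesis by (rule T_close_Letter_Letter_removed[OF assms(1-4)])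
next
  case False
  then show ?thesis by (intro T_close_Letter_Letter_kept[OF assms] R'_eq_R)
qed

lemma T_close_TauRun:
  assumes "x \<in> Om" "y \<in> Om" "first_block x = TauRun r" "first_block y \<noteq> TauRun r"
  shows "T_close x y"
proof (cases "first_block y")
  case (TauRun r')
  then have "r < r' \<or> r' < r" using assms(4) by auto
  then show ?thesis
    using T_close_TauRun_TauRun[OF assms(3) TauRun] T_close_TauRun_TauRun[OF TauRun assms(3)] T_close_swap
    by blast
next
  case (KapRun s) then show ?thesis by (rule T_close_TauRun_KapRun[OF assms(3)])
next
  case KapKap then show ?thesis by (rule T_close_TauRun_KapKap[OF assms(3)])
next
  case Letter then show ?thesis by (rule T_close_TauRun_Letter[OF assms(2,3)])
qed

lemma T_close_KapRun:
  assumes "x \<in> Om" "y \<in> Om" "first_block x = KapRun s" "first_block y \<noteq> KapRun s"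
  shows "T_close x y"
proof (cases "first_block y")
  case (TauRun r) then show ?thesis using T_close_TauRun[OF assms(2,1) TauRun] assms(3) T_close_swap by simp
next
  case (KapRun s')
  then have "s < s' \<or> s' < s" using assms(4) by auto
  then show ?thesis
    using T_close_KapRun_KapRun[OF assms(3) KapRun] T_close_KapRun_KapRun[OF KapRun assms(3)] T_close_swap
    by blast
next
  case KapKap then show ?thesis by (rule T_close_KapRun_KapKap[OF assms(3)])
next
  case Letter then show ?thesis by (rule T_close_KapRun_Letter[OF assms(2,3)])
qed

lemma T_close_first_blocks_differ:
  assumes "x \<in> Om" "y \<in> Om" "\<not> (first_block x = first_block y \<and> x 0 = y 0)"
  shows "T_close x y"
proof (cases "first_block x")
  case (TauRun r)
  then show ?thesis using T_close_TauRun[OF assms(1,2) TauRun] TauRun_D(1)[of x r] TauRun_D(1)[of y r] assms(3)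
    by metis
next
  case (KapRun s)
  then show ?thesis using T_close_KapRun[OF assms(1,2) KapRun] KapRun_D(1)[of x s] KapRun_D(1)[of y s] assms(3)
    unfolding kap_run_def by metis
next
  case KapKap
  show ?thesis
  proof (cases "first_block y")
    case (TauRun r) then show ?thesis using T_close_TauRun[OF assms(2,1) TauRun] KapKap T_close_swap by simp
  next
    case (KapRun s) then show ?thesis using T_close_KapRun[OF assms(2,1) KapRun] KapKap T_close_swap by simp
  next
    case KapKap
    then show ?thesis using \<open>first_block x = KapKap\<close> KapKap_D[of x] KapKap_D[of y] assms(3)
      unfolding kap_run_def by simp
  next
    case Letter then show ?thesis by (rule T_close_KapKap_Letter[OF assms(2) \<open>first_block x = KapKap\<close>])
  qed
next
  case Letter
  show ?thesis
  proof (cases "first_block y")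
    case (TauRun r) then show ?thesis using T_close_TauRun[OF assms(2,1) TauRun] Letter T_close_swap by simp
  next
    case (KapRun s) then show ?thesis using T_close_KapRun[OF assms(2,1) KapRun] Letter T_close_swap by simp
  next
    case KapKap then show ?thesis using T_close_KapKap_Letter[OF assms(1) KapKap Letter] T_close_swap by simp
  next
    case Letter
    then show ?thesis using T_close_Letter_Letter[OF assms(1,2) \<open>first_block x = Letter\<close>] assms(3)
        \<open>first_block x = Letter\<close> by simp
  qed
qed

text \<open>Blocks of equal type and letter are recoded alike, so they only delay both itineraries by their
  common length.\<close>

lemma T_close_shift_block:
  assumes same: "first_block x = first_block y" "x 0 = y 0"
    and close: "T_close (shift (block_len (first_block x)) x) (shift (block_len (first_block x)) y)"
  shows "T_close x y"
proof -
  let ?l = "block_len (first_block x)"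
  have "T_of R x y = enat ?l + T_of R (shift ?l x) (shift ?l y)"
    using T_of_shift[OF same_first_block_agree(1)[OF same]] .
  moreover have "T_of R' (recode x) (recode y) = enat ?l + T_of R' (recode (shift ?l x)) (recode (shift ?l y))"
    using T_of_shift[OF same_first_block_agree(2)[OF same], of R'] shift_recode[of x] shift_recode[of y] same(1)
    by simp
  ultimately show ?thesis using close unfolding T_close_def by (simp add: add.assoc add_left_mono)
qed

lemma T_close_first_diff:
  "agree_below x y n \<Longrightarrow> x n \<noteq> y n \<Longrightarrow> x \<in> Om \<Longrightarrow> y \<in> Om \<Longrightarrow> T_close x y"
proof (induction n arbitrary: x y rule: less_induct)
  case (less n)
  show ?case
  proof (cases "first_block x = first_block y \<and> x 0 = y 0")
    case False
    then show ?thesis using T_close_first_blocks_differ less.prems(3,4) by blast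
  next
    case True
    let ?l = "block_len (first_block x)"
    have "agree_below x y ?l" using same_first_block_agree(1) True by blast
    then have "?l \<le> n" using less.prems(2) unfolding agree_below_def by (meson not_le)
    moreover have "0 < ?l" by (rule block_len_pos)
    ultimately have "T_close (shift ?l x) (shift ?l y)"
    proof (intro less.IH[of "n - ?l"])
      show "agree_below (shift ?l x) (shift ?l y) (n - ?l)"
        using less.prems(1) \<open>?l \<le> n\<close> unfolding agree_below_def by simp
      show "shift ?l x (n - ?l) \<noteq> shift ?l y (n - ?l)" using less.prems(2) \<open>?l \<le> n\<close> by simp
      show "shift ?l x \<in> Om" "shift ?l y \<in> Om" using shift_Omega less.prems(3,4) by blast+
    qed simp
    then show ?thesis using T_close_shift_block True by blast
  qed
qed

lemma T_close: "x \<in> Om \<Longrightarrow> y \<in> Om \<Longrightarrow> T_close x y"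
proof (cases "x = y")
  case True
  then show ?thesis unfolding T_close_def by (simp add: T_of_refl)
next
  case False
  then obtain i where "\<not> agree_below x y (Suc i)" unfolding agree_below_def by (meson ext lessI)
  then obtain n where "agree_below x y n" "x n \<noteq> y n" by (rule first_difference)
  moreover assume "x \<in> Om" "y \<in> Om"
  ultimately show ?thesis by (rule T_close_first_diff)
qed

end

definition Omega_from :: "nat \<Rightarrow> int \<Rightarrow> nat \<Rightarrow> (nat \<Rightarrow> int) set" where
  "Omega_from N k n = {x. (\<forall>i. x i \<in> Sig N) \<and> (\<forall>i\<ge>n. x i = k)}"

lemma Omega_eq_UN_Omega_from: "Omega N k = (\<Union>n. Omega_from N k n)"
  unfolding Omega_def Omega_from_def by blast

lemma finite_Omega_from: "finite (Omega_from N k n)"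
proof -
  have "inj_on (\<lambda>x. map x [0..<n]) (Omega_from N k n)"
  proof (rule inj_onI)
    fix x y assume x: "x \<in> Omega_from N k n" and y: "y \<in> Omega_from N k n"
      and eq: "map x [0..<n] = map y [0..<n]"
    show "x = y"
    proof
      fix i show "x i = y i"
      proof (cases "i < n")
        case True
        then show ?thesis using arg_cong[OF eq, of "\<lambda>xs. xs ! i"] by simp
      next
        case False
        then show ?thesis using x y unfolding Omega_from_def by simp
      qed
    qed
  qed
  moreover have "(\<lambda>x. map x [0..<n]) ` Omega_from N k n \<subseteq> {xs. set xs \<subseteq> Sig N \<and> length xs = n}"
    unfolding Omega_from_def by auto
  moreover have "finite {xs. set xs \<subseteq> Sig N \<and> length xs = n}"
    by (rule finite_lists_length_eq) (simp add: Sig_def)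
  ultimately show ?thesis using finite_subset finite_imageD by blast
qed

context recoding
begin

lemma recode_beyond_block:
  assumes "\<not> i < block_len (first_block x)"
  shows "recode x i = recode (shift (block_len (first_block x)) x) (i - block_len (first_block x))"
proof -
  have eq: "block_len (first_block x) + (i - block_len (first_block x)) = i" using assms by simp
  show ?thesis using recode_after_block[of x "i - block_len (first_block x)", unfolded eq] .
qed

lemma block_image_in: "block_image b c i \<in> {kap, A, G, tau, c}"
  unfolding block_image_def by (cases b) auto

lemma recode_letters: "recode x i \<in> {kap, A, G, tau} \<union> range x"
proof (induction i arbitrary: x rule: less_induct)
  case (less i)
  let ?l = "block_len (first_block x)"
  show ?case
  proof (cases "i < ?l")
    case True
    then show ?thesis using recode_in_block[OF True] block_image_in[of "first_block x" "x 0" i] by auto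
  next
    case False
    have "recode (shift ?l x) (i - ?l) \<in> {kap, A, G, tau} \<union> range (shift ?l x)"
      using block_len_less[OF False] by (rule less.IH)
    moreover have "range (shift ?l x) \<subseteq> range x" unfolding shift_def by auto
    ultimately show ?thesis unfolding recode_beyond_block[OF False] by blast
  qed
qed

lemma last_of_block: "first_block x \<noteq> Letter \<Longrightarrow> x (block_len (first_block x) - 1) = G"
proof (cases "first_block x")
  case (TauRun r) then show ?thesis using TauRun_D(2)[OF TauRun, of r] TauRun_D(4)[OF TauRun] by simp
next
  case (KapRun s) then show ?thesis using KapRun_D(1)[OF KapRun] unfolding kap_run_def by simp
next
  case KapKap then show ?thesis using KapKap_D[OF KapKap] unfolding kap_run_def by (simp add: numeral_3_eq_3)
qed simp

text \<open>A block never ends inside a tail \<open>\<kappa>\<^sup>\<infinity>\<close>, since it ends with \<open>G\<close>.\<close>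

lemma recode_tail: "\<forall>j\<ge>n. x j = kap \<Longrightarrow> n \<le> k \<Longrightarrow> recode x k = kap"
proof (induction k arbitrary: x n rule: less_induct)
  case (less k)
  let ?l = "block_len (first_block x)"
  show ?case
  proof (cases "k < ?l")
    case True
    show ?thesis
    proof (cases "first_block x = Letter")
      case True
      then have "k = 0" using \<open>k < ?l\<close> by simp
      moreover have "x 0 = kap" using less.prems \<open>k = 0\<close> by blast
      ultimately show ?thesis using recode_Letter_0[OF True] by simp
    next
      case False
      then have "x (?l - 1) = G" by (rule last_of_block)
      moreover have "x (?l - 1) = kap" using True less.prems by simp
      ultimately show ?thesis using kap_ne_G by simp
    qed
  next
    case False
    have "\<forall>j\<ge>n - ?l. shift ?l x j = kap" using less.prems(1) by simp
    then have "recode (shift ?l x) (k - ?l) = kap"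
      using less.IH[of "k - ?l"] block_len_less[OF False] less.prems(2) by simp
    then show ?thesis using recode_beyond_block[OF False] by simp
  qed
qed

lemma recode_Omega_from:
  assumes "{tau, kap, A, G} \<subseteq> Sig N" "x \<in> Omega_from N kap n"
  shows "recode x \<in> Omega_from N kap n"
proof -
  have "recode x i \<in> Sig N" for i using recode_letters[of x i] assms unfolding Omega_from_def by auto
  moreover have "recode x i = kap" if "n \<le> i" for i
    using recode_tail[OF _ that] assms(2) unfolding Omega_from_def by blast
  ultimately show ?thesis unfolding Omega_from_def by blast
qed

lemma recode_TauRun_eq:
  assumes x: "first_block x = TauRun r" and eq: "recode y = recode x"
  shows "first_block y = TauRun r"
proof (cases "first_block y")
  case (TauRun r')
  then have "r' - 2 = r - 2" using kap_run_unique kap_run_recode_TauRun x eq by metis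
  then show ?thesis using TauRun TauRun_D(4)[OF x] TauRun_D(4)[OF TauRun] by simp
next
  case (KapRun s)
  then have "s - 1 = r - 2" using kap_run_unique kap_run_recode_KapRun kap_run_recode_TauRun x eq by metis
  then have "Suc (Suc s) = Suc r" using KapRun_D(2)[OF KapRun] TauRun_D(4)[OF x] by simp
  then show ?thesis using recode_KapRun(5)[OF KapRun] recode_TauRun(5)[OF x] eq by simp
next
  case KapKap
  then show ?thesis using recode_KapKap(1)[OF KapKap] recode_TauRun(1)[OF x] eq tau_ne_kap by simp
next
  case Letter
  then show ?thesis using Letter_not_kap_run_recode kap_run_recode_TauRun[OF x] eq by metis
qed

lemma recode_KapRun_eq:
  assumes x: "first_block x = KapRun s" and eq: "recode y = recode x"
  shows "first_block y = KapRun s"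
proof (cases "first_block y")
  case (TauRun r)
  then show ?thesis using recode_TauRun_eq[OF TauRun eq[symmetric]] x by simp
next
  case (KapRun s')
  then have "s' - 1 = s - 1" using kap_run_unique kap_run_recode_KapRun x eq by metis
  then show ?thesis using KapRun KapRun_D(2)[OF x] KapRun_D(2)[OF KapRun] by simp
next
  case KapKap
  then show ?thesis using recode_KapKap(1)[OF KapKap] recode_KapRun(1)[OF x] eq tau_ne_kap by simp
next
  case Letter
  then show ?thesis using Letter_not_kap_run_recode kap_run_recode_KapRun[OF x] eq by metis
qed

lemma recode_KapKap_eq:
  assumes x: "first_block x = KapKap" and y: "y \<in> Omega N kap" and eq: "recode y = recode x"
  shows "first_block y = KapKap"
proof (cases "first_block y")
  case (TauRun r) then show ?thesis using recode_TauRun_eq[OF TauRun eq[symmetric]] x by simp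
next
  case (KapRun s) then show ?thesis using recode_KapRun_eq[OF KapRun eq[symmetric]] x by simp
next
  case Letter
  have "y 0 = tau" using recode_Letter_0[OF Letter] recode_KapKap(1)[OF x] eq by simp
  then show ?thesis using recode_Letter_tau[OF y Letter] recode_KapKap(2,3)[OF x] eq by simp
qed simp

lemma recode_eq_first_block:
  assumes x: "x \<in> Omega N kap" and y: "y \<in> Omega N kap" and eq: "recode x = recode y"
  shows "first_block x = first_block y" "x 0 = y 0"
proof -
  show same: "first_block x = first_block y"
  proof (cases "first_block x")
    case (TauRun r) then show ?thesis using recode_TauRun_eq[OF _ eq[symmetric]] by simp
  next
    case (KapRun s) then show ?thesis using recode_KapRun_eq[OF _ eq[symmetric]] by simp
  next
    case KapKap then show ?thesis using recode_KapKap_eq[OF _ y eq[symmetric]] by simp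
  next
    case Letter
    then show ?thesis using recode_TauRun_eq[OF _ eq] recode_KapRun_eq[OF _ eq] recode_KapKap_eq[OF _ x eq]
      by (cases "first_block y") simp_all
  qed
  show "x 0 = y 0"
  proof (cases "first_block x")
    case (TauRun r) then show ?thesis using same TauRun_D(1) by metis
  next
    case (KapRun s) then show ?thesis using same KapRun_D(1) unfolding kap_run_def by metis
  next
    case KapKap then show ?thesis using same KapKap_D unfolding kap_run_def by metis
  next
    case Letter then show ?thesis using same recode_Letter_0 eq by metis
  qed
qed

lemma recode_inj_on_letters:
  "x \<in> Omega N kap \<Longrightarrow> y \<in> Omega N kap \<Longrightarrow> recode x = recode y \<Longrightarrow> x i = y i"
proof (induction i arbitrary: x y rule: less_induct)
  case (less i)
  let ?l = "block_len (first_block x)"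
  have same: "first_block x = first_block y" "x 0 = y 0" using recode_eq_first_block less.prems by blast+
  show ?case
  proof (cases "i < ?l")
    case True
    then show ?thesis using same_first_block_agree(1)[OF same] unfolding agree_below_def by blast
  next
    case False
    have "recode (shift ?l x) = recode (shift ?l y)"
      using shift_recode[of x] shift_recode[of y] same(1) less.prems(3) by simp
    then have "shift ?l x (i - ?l) = shift ?l y (i - ?l)"
      using less.IH[of "i - ?l"] block_len_less[OF False] shift_Omega less.prems(1,2) by blast
    then show ?thesis using False by simp
  qed
qed

lemma inj_on_recode: "inj_on recode (Omega N kap)"
  by (rule inj_onI) (use recode_inj_on_letters in blast)

text \<open>Surjectivity comes for free: the recoding injects each of the finite sets \<open>Omega_from N \<kappa> n\<close>
  into itself.\<close>

lemma bij_betw_recode: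
  assumes "{tau, kap, A, G} \<subseteq> Sig N"
  shows "bij_betw recode (Omega N kap) (Omega N kap)"
proof -
  have "recode ` Omega_from N kap n = Omega_from N kap n" for n
  proof (rule endo_inj_surj)
    show "finite (Omega_from N kap n)" by (rule finite_Omega_from)
    show "recode ` Omega_from N kap n \<subseteq> Omega_from N kap n" using recode_Omega_from[OF assms] by blast
    show "inj_on recode (Omega_from N kap n)"
      using inj_on_recode Omega_eq_UN_Omega_from by (metis UN_upper UNIV_I inj_on_subset)
  qed
  then have "recode ` Omega N kap = Omega N kap" unfolding Omega_eq_UN_Omega_from by (simp add: image_UN)
  then show ?thesis using inj_on_recode unfolding bij_betw_def by blast
qed

end

lemma triangle_automaton_labels:
  assumes "triangle_automaton N M"
  shows "ta M \<noteq> tb M" "ta M \<noteq> tc M" "tb M \<noteq> tc M"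
  using assms unfolding triangle_automaton_def by auto

lemma labpairs_cases:
  "(u, v) \<in> labpairs M \<Longrightarrow>
   (u, v) = (ta M, tb M) \<or> (u, v) = (tb M, ta M) \<or> (u, v) = (ta M, tc M) \<or>
   (u, v) = (tc M, ta M) \<or> (u, v) = (tb M, tc M) \<or> (u, v) = (tc M, tb M)"
  unfolding labpairs_def by auto

lemma labpairs_labels:
  assumes "ta M \<noteq> tb M" "ta M \<noteq> tc M" "tb M \<noteq> tc M"
  shows "(ta M, tb M) \<in> labpairs M" "(tb M, ta M) \<in> labpairs M" "(ta M, tc M) \<in> labpairs M"
    "(tc M, ta M) \<in> labpairs M" "(tb M, tc M) \<in> labpairs M" "(tc M, tb M) \<in> labpairs M"
  using assms unfolding labpairs_def by auto

lemma Prel_labels: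
  assumes "ta M \<noteq> tb M" "ta M \<noteq> tc M" "tb M \<noteq> tc M"
  shows "Prel M (ta M) (tb M) = Pab M" "Prel M (tb M) (ta M) = (Pab M)\<inverse>"
    "Prel M (ta M) (tc M) = Pag M" "Prel M (tc M) (ta M) = (Pag M)\<inverse>"
    "Prel M (tb M) (tc M) = Pbg M" "Prel M (tc M) (tb M) = (Pbg M)\<inverse>"
  using assms by (simp_all add: Prel_def)

lemma Prel_not_label:
  assumes "\<not> ((u, v) = (ta M, tb M) \<or> (u, v) = (tb M, ta M) \<or> (u, v) = (ta M, tc M) \<or>
   (u, v) = (tc M, ta M) \<or> (u, v) = (tb M, tc M) \<or> (u, v) = (tc M, tb M))"
  shows "Prel M u v = {}"
proof -
  have "(u, v) \<noteq> (ta M, tb M)" "(u, v) \<noteq> (tb M, ta M)" "(u, v) \<noteq> (ta M, tc M)"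
    "(u, v) \<noteq> (tc M, ta M)" "(u, v) \<noteq> (tb M, tc M)" "(u, v) \<noteq> (tc M, tb M)" using assms by blast+
  then show ?thesis unfolding Prel_def by presburger
qed

lemma Prel_nonempty_labpairs:
  assumes d: "ta M \<noteq> tb M" "ta M \<noteq> tc M" "tb M \<noteq> tc M" and p: "p \<in> Prel M u v"
  shows "(u, v) \<in> labpairs M"
proof -
  have "(u, v) = (ta M, tb M) \<or> (u, v) = (tb M, ta M) \<or> (u, v) = (ta M, tc M) \<or>
   (u, v) = (tc M, ta M) \<or> (u, v) = (tb M, tc M) \<or> (u, v) = (tc M, tb M)"
    using Prel_not_label[of u v M] p by blast
  then show ?thesis using labpairs_labels[OF d] by blast
qed

lemma Prel_converse:
  assumes d: "ta M \<noteq> tb M" "ta M \<noteq> tc M" "tb M \<noteq> tc M" and l: "(u, v) \<in> labpairs M"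
  shows "Prel M v u = (Prel M u v)\<inverse>"
  using labpairs_cases[OF l]
proof (elim disjE)
qed (simp_all add: Prel_labels[OF d])

lemma Prel_disjoint:
  assumes "triangle_automaton N M" "(a, b) \<in> Prel M u v" "(a, b) \<in> Prel M u' v'"
  shows "(u, v) = (u', v')"
proof -
  note d = triangle_automaton_labels[OF assms(1)]
  have l: "(u, v) \<in> labpairs M" "(u', v') \<in> labpairs M" using Prel_nonempty_labpairs[OF d] assms(2,3) by auto
  show ?thesis
  proof (rule ccontr)
    assume "(u, v) \<noteq> (u', v')"
    then have "Prel M u v \<inter> Prel M u' v' = {}" using assms(1) l unfolding triangle_automaton_def
      by (metis fst_conv snd_conv)
    then show False using assms(2,3) by blast
  qed
qed

lemma tri_delta_Id_St_D: "tri_delta M Id (a, b) = St u v \<Longrightarrow> (a, b) \<in> Prel M u v"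
  by (simp split: if_splits)

lemma tri_delta_Id_not_Id: "a \<noteq> b \<Longrightarrow> tri_delta M Id (a, b) \<noteq> Id"
  by (simp split: if_splits)

lemma tri_delta_Id_cases: "a \<noteq> b \<Longrightarrow> tri_delta M Id (a, b) = Exit \<or> (\<exists>u v. tri_delta M Id (a, b) = St u v)"
  using tri_delta_Id_not_Id[of a b M] by (cases "tri_delta M Id (a, b)") auto

lemma tri_delta_Id_Exit_D: "a \<noteq> b \<Longrightarrow> tri_delta M Id (a, b) = Exit \<Longrightarrow>
  (a, b) \<notin> Prel M (ta M) (tb M) \<and> (a, b) \<notin> Prel M (tb M) (ta M) \<and> (a, b) \<notin> Prel M (ta M) (tc M) \<and>
  (a, b) \<notin> Prel M (tc M) (ta M) \<and> (a, b) \<notin> Prel M (tb M) (tc M) \<and> (a, b) \<notin> Prel M (tc M) (tb M)"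
  by (simp split: if_splits)

lemma tri_delta_Id_St:
  assumes t: "triangle_automaton N M" and ab: "a \<noteq> b" and m: "(a, b) \<in> Prel M u v"
  shows "tri_delta M Id (a, b) = St u v"
proof -
  note d = triangle_automaton_labels[OF t]
  have "tri_delta M Id (a, b) \<noteq> Exit"
  proof
    assume e: "tri_delta M Id (a, b) = Exit"
    have l: "(u, v) \<in> labpairs M" using Prel_nonempty_labpairs[OF d m] .
    have n: "(a, b) \<notin> Prel M (ta M) (tb M)" "(a, b) \<notin> Prel M (tb M) (ta M)" "(a, b) \<notin> Prel M (ta M) (tc M)"
      "(a, b) \<notin> Prel M (tc M) (ta M)" "(a, b) \<notin> Prel M (tb M) (tc M)" "(a, b) \<notin> Prel M (tc M) (tb M)"
      using tri_delta_Id_Exit_D[OF ab e] by auto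
    from labpairs_cases[OF l] show False
    proof (elim disjE)
    qed (use n m in auto)
  qed
  then obtain u' v' where e: "tri_delta M Id (a, b) = St u' v'" using tri_delta_Id_cases[OF ab] by blast
  then have "(a, b) \<in> Prel M u' v'" by (rule tri_delta_Id_St_D)
  then have "(u, v) = (u', v')" using Prel_disjoint[OF t m] by blast
  then show ?thesis using e by simp
qed

lemma tri_delta_Id_Exit:
  assumes "a \<noteq> b" "\<And>u v. (a, b) \<notin> Prel M u v"
  shows "tri_delta M Id (a, b) = Exit"
proof -
  have "\<not> (\<exists>u v. tri_delta M Id (a, b) = St u v)" using tri_delta_Id_St_D assms(2) by blast
  then show ?thesis using tri_delta_Id_cases[OF assms(1)] by blast
qed

lemma tri_delta_Id_swap:
  assumes t: "triangle_automaton N M"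
  shows "swap_symmetric (\<lambda>a b. tri_delta M Id (a, b))"
  unfolding swap_symmetric_def
proof (intro allI impI)
  fix a b :: int assume ab: "a \<noteq> b"
  note d = triangle_automaton_labels[OF t]
  show "tri_delta M Id (b, a) = swap_state (tri_delta M Id (a, b))"
  proof (cases "tri_delta M Id (a, b)")
    case (St u v)
    then have "(a, b) \<in> Prel M u v" by (rule tri_delta_Id_St_D)
    then have "(b, a) \<in> Prel M v u" using Prel_converse[OF d Prel_nonempty_labpairs[OF d \<open>(a, b) \<in> Prel M u v\<close>]] by auto
    then show ?thesis using tri_delta_Id_St[OF t] ab St by simp
  next
    case Exit
    have "\<And>u v. (b, a) \<notin> Prel M u v"
    proof
      fix u v assume "(b, a) \<in> Prel M u v"
      then have "(a, b) \<in> Prel M v u" using Prel_converse[OF d Prel_nonempty_labpairs[OF d \<open>(b, a) \<in> Prel M u v\<close>]] by auto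
      then show False using tri_delta_Id_St[OF t] ab Exit by simp
    qed
    then show ?thesis using tri_delta_Id_Exit ab Exit by simp
  next
    case Id then show ?thesis using tri_delta_Id_not_Id[OF ab, of M] by simp
  qed
qed

lemma Prel_irrefl: "triangle_automaton N M \<Longrightarrow> (i, i) \<notin> Prel M u v"
  using Prel_nonempty_labpairs[of M] unfolding triangle_automaton_def by (metis fst_conv snd_conv)

lemma converse_notin_relations:
  assumes M: "triangle_automaton N M" and p: "(a, b) \<in> Pab M \<union> Pag M \<union> Pbg M"
  shows "(b, a) \<notin> Pab M \<union> Pag M \<union> Pbg M"
proof
  note d = triangle_automaton_labels[OF M]
  let ?F = "{(ta M, tb M), (ta M, tc M), (tb M, tc M)}"
  have forward: "\<exists>(u, v) \<in> ?F. q \<in> Prel M u v" if "q \<in> Pab M \<union> Pag M \<union> Pbg M" for q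
    using that Prel_labels[OF d] by auto
  assume "(b, a) \<in> Pab M \<union> Pag M \<union> Pbg M"
  then obtain u' v' where "(u', v') \<in> ?F" "(b, a) \<in> Prel M u' v'" using forward by blast
  moreover obtain u v where "(u, v) \<in> ?F" "(a, b) \<in> Prel M u v" using forward[OF p] by blast
  moreover have "(a, b) \<in> Prel M v' u'"
    using Prel_converse[OF d Prel_nonempty_labpairs[OF d \<open>(b, a) \<in> Prel M u' v'\<close>]]
      \<open>(b, a) \<in> Prel M u' v'\<close> by blast
  ultimately have "(u, v) = (v', u')" using Prel_disjoint[OF M] by blast
  then show False using \<open>(u, v) \<in> ?F\<close> \<open>(u', v') \<in> ?F\<close> d by auto
qed

definition remove_pairs :: "tri \<Rightarrow> (int \<times> int) set \<Rightarrow> tri" where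
  "remove_pairs M D = Tri (ta M) (tb M) (tc M) (Pab M - D) (Pag M - D) (Pbg M - D)"

lemma Prel_remove_pairs:
  assumes M: "triangle_automaton N M" and D: "D \<subseteq> Pab M \<union> Pag M \<union> Pbg M"
  shows "Prel (remove_pairs M D) u v = Prel M u v - (D \<union> D\<inverse>)"
proof -
  note d = triangle_automaton_labels[OF M]
  have "D\<inverse> \<inter> (Pab M \<union> Pag M \<union> Pbg M) = {}" using converse_notin_relations[OF M] D by auto
  then have "Pab M - D = Pab M - (D \<union> D\<inverse>)" "Pag M - D = Pag M - (D \<union> D\<inverse>)" "Pbg M - D = Pbg M - (D \<union> D\<inverse>)"
    by auto
  moreover have "(X - (D \<union> D\<inverse>))\<inverse> = X\<inverse> - (D \<union> D\<inverse>)" for X by auto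
  ultimately show ?thesis using d unfolding remove_pairs_def Prel_def by simp
qed

lemma tri_delta_remove_pairs:
  assumes M: "triangle_automaton N M" and D: "D \<subseteq> Pab M \<union> Pag M \<union> Pbg M"
  shows "tri_delta (remove_pairs M D) Id (a, b) = (if (a, b) \<in> D \<union> D\<inverse> then Exit else tri_delta M Id (a, b))"
proof -
  have labels: "ta (remove_pairs M D) = ta M" "tb (remove_pairs M D) = tb M" "tc (remove_pairs M D) = tc M"
    by (simp_all add: remove_pairs_def)
  note d = triangle_automaton_labels[OF M]
  have "(a, a) \<notin> D \<union> D\<inverse>" using D Prel_irrefl[OF M] Prel_labels[OF d] by blast
  then show ?thesis using Prel_remove_pairs[OF M D] by (cases "a = b") (simp_all add: labels)
qed

lemma relations_disjoint:
  assumes M: "triangle_automaton N M"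
  shows "Pab M \<inter> Pag M = {}" "Pab M \<inter> Pbg M = {}" "Pag M \<inter> Pbg M = {}"
proof -
  note d = triangle_automaton_labels[OF M]
  have "(a, b) \<notin> Pag M" if "(a, b) \<in> Pab M" for a b
    using Prel_disjoint[OF M, of a b "ta M" "tb M" "ta M" "tc M"] that Prel_labels[OF d] d by auto
  moreover have "(a, b) \<notin> Pbg M" if "(a, b) \<in> Pab M" for a b
    using Prel_disjoint[OF M, of a b "ta M" "tb M" "tb M" "tc M"] that Prel_labels[OF d] d by auto
  moreover have "(a, b) \<notin> Pbg M" if "(a, b) \<in> Pag M" for a b
    using Prel_disjoint[OF M, of a b "ta M" "tc M" "tb M" "tc M"] that Prel_labels[OF d] d by auto
  ultimately show "Pab M \<inter> Pag M = {}" "Pab M \<inter> Pbg M = {}" "Pag M \<inter> Pbg M = {}" by auto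
qed

lemma gasket_gathering:
  assumes "gasket_automaton N M"
  shows "(a, c) \<in> Pag M \<Longrightarrow> (a, b) \<in> Pbg M \<Longrightarrow> (b, c) \<in> Pab M"
    "(a, c) \<in> Pag M \<Longrightarrow> (b, c) \<in> Pab M \<Longrightarrow> (a, b) \<in> Pbg M"
    "(a, b) \<in> Pbg M \<Longrightarrow> (b, c) \<in> Pab M \<Longrightarrow> (a, c) \<in> Pag M"
  using assms unfolding gasket_automaton_def Let_def by blast+

lemma gasket_uniqueness:
  "gasket_automaton N M \<Longrightarrow> (u, v) \<in> labpairs M \<Longrightarrow> (i, j) \<in> Prel M u v \<Longrightarrow> (i, j') \<in> Prel M u v \<Longrightarrow> j = j'"
  unfolding gasket_automaton_def by blast

lemma remove_pairs_eqI:
  "Pab M - D = P1 \<Longrightarrow> Pag M - D = P2 \<Longrightarrow> Pbg M - D = P3 \<Longrightarrow>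
    remove_pairs M D = Tri (ta M) (tb M) (tc M) P1 P2 P3"
  by (simp add: remove_pairs_def)

lemma one_step_simplification_Pag:
  assumes gas: "gasket_automaton N M" and os: "one_step_simplification M \<tau> \<kappa> M'" and ag: "(\<tau>, \<kappa>) \<in> Pag M"
  shows "M' = remove_pairs M (insert (\<tau>, \<kappa>) ({\<tau>} \<times> {l. (l, \<kappa>) \<in> Prel M (ta M) (tb M)}))"
proof -
  have M: "triangle_automaton N M" using gas unfolding gasket_automaton_def by blast
  note d = triangle_automaton_labels[OF M]
  note P = Prel_labels[OF d] and disj = relations_disjoint[OF M]
  let ?L = "{l. (l, \<kappa>) \<in> Prel M (ta M) (tb M)}"
  have tk: "(\<tau>, \<kappa>) \<notin> Pab M" "(\<tau>, \<kappa>) \<notin> Pbg M" using ag disj by blast+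
  from ag have "\<not> (\<exists>l. (l, \<kappa>) \<in> Prel M (ta M) (tb M)) \<and>
      M' = Tri (ta M) (tb M) (tc M) (Pab M) (Pag M - {(\<tau>, \<kappa>)}) (Pbg M) \<or>
    (\<exists>l. (l, \<kappa>) \<in> Prel M (ta M) (tb M) \<and>
      M' = Tri (ta M) (tb M) (tc M) (Pab M) (Pag M - {(\<tau>, \<kappa>)}) (Pbg M - {(\<tau>, l)}))"
    using os unfolding one_step_simplification_def by (elim conjE) (erule mp)
  then show ?thesis
  proof (elim disjE exE conjE)
    assume "\<not> (\<exists>l. (l, \<kappa>) \<in> Prel M (ta M) (tb M))"
      and M': "M' = Tri (ta M) (tb M) (tc M) (Pab M) (Pag M - {(\<tau>, \<kappa>)}) (Pbg M)"
    then have "?L = {}" by blast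
    then show ?thesis unfolding M' by (intro remove_pairs_eqI[symmetric]) (use tk in auto)
  next
    fix l assume l: "(l, \<kappa>) \<in> Prel M (ta M) (tb M)"
      and M': "M' = Tri (ta M) (tb M) (tc M) (Pab M) (Pag M - {(\<tau>, \<kappa>)}) (Pbg M - {(\<tau>, l)})"
    have "l' = l" if "(l', \<kappa>) \<in> Prel M (ta M) (tb M)" for l'
      using gasket_uniqueness[OF gas, of "tb M" "ta M" \<kappa> l' l] that l P labpairs_labels[OF d] by simp
    then have L: "?L = {l}" using l by blast
    have "(\<tau>, l) \<in> Pbg M" using gasket_gathering(2)[OF gas ag] l P by simp
    then have "(\<tau>, l) \<notin> Pab M" "(\<tau>, l) \<notin> Pag M" using disj by blast+
    then show ?thesis unfolding L M' by (intro remove_pairs_eqI[symmetric]) (use tk in auto)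
  qed
qed

lemma one_step_simplification_Pbg:
  assumes gas: "gasket_automaton N M" and os: "one_step_simplification M \<tau> \<kappa> M'" and bg: "(\<tau>, \<kappa>) \<in> Pbg M"
  shows "M' = remove_pairs M (insert (\<tau>, \<kappa>) ({\<tau>} \<times> {l. (l, \<kappa>) \<in> Prel M (tb M) (ta M)}))"
proof -
  have M: "triangle_automaton N M" using gas unfolding gasket_automaton_def by blast
  note d = triangle_automaton_labels[OF M]
  note P = Prel_labels[OF d] and disj = relations_disjoint[OF M]
  let ?L = "{l. (l, \<kappa>) \<in> Prel M (tb M) (ta M)}"
  have tk: "(\<tau>, \<kappa>) \<notin> Pab M" "(\<tau>, \<kappa>) \<notin> Pag M" using bg disj by blast+
  from bg have "\<not> (\<exists>l. (l, \<kappa>) \<in> Prel M (tb M) (ta M)) \<and>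
      M' = Tri (ta M) (tb M) (tc M) (Pab M) (Pag M) (Pbg M - {(\<tau>, \<kappa>)}) \<or>
    (\<exists>l. (l, \<kappa>) \<in> Prel M (tb M) (ta M) \<and>
      M' = Tri (ta M) (tb M) (tc M) (Pab M) (Pag M - {(\<tau>, l)}) (Pbg M - {(\<tau>, \<kappa>)}))"
    using os unfolding one_step_simplification_def by (elim conjE) (erule mp)
  then show ?thesis
  proof (elim disjE exE conjE)
    assume "\<not> (\<exists>l. (l, \<kappa>) \<in> Prel M (tb M) (ta M))"
      and M': "M' = Tri (ta M) (tb M) (tc M) (Pab M) (Pag M) (Pbg M - {(\<tau>, \<kappa>)})"
    then have "?L = {}" by blast
    then show ?thesis unfolding M' by (intro remove_pairs_eqI[symmetric]) (use tk in auto)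
  next
    fix l assume l: "(l, \<kappa>) \<in> Prel M (tb M) (ta M)"
      and M': "M' = Tri (ta M) (tb M) (tc M) (Pab M) (Pag M - {(\<tau>, l)}) (Pbg M - {(\<tau>, \<kappa>)})"
    have "l' = l" if "(l', \<kappa>) \<in> Prel M (tb M) (ta M)" for l'
      using gasket_uniqueness[OF gas, of "ta M" "tb M" \<kappa> l' l] that l P labpairs_labels[OF d] by simp
    then have L: "?L = {l}" using l by blast
    have "(\<tau>, l) \<in> Pag M" using gasket_gathering(3)[OF gas bg] l P by simp
    then have "(\<tau>, l) \<notin> Pab M" "(\<tau>, l) \<notin> Pbg M" using disj by blast+
    then show ?thesis unfolding L M' by (intro remove_pairs_eqI[symmetric]) (use tk in auto)
  qed
qed

text \<open>A one-step simplification deletes \<open>(\<tau>, \<kappa>)\<close> and the pairs \<open>(\<tau>, \<lambda>)\<close> with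
  \<open>\<lambda> \<triangleleft>\<^sub>A\<^sub>B \<kappa>\<close>, where \<open>A\<close> is the label with \<open>(\<tau>, \<kappa>) \<in> P\<^sub>A\<^sub>\<gamma>\<close>; by Gathering these pairs lie in
  \<open>P\<^sub>A\<^sub>\<gamma>\<close> and \<open>P\<^sub>B\<^sub>\<gamma>\<close>, and by Uniqueness there is at most one such \<open>\<lambda>\<close>.\<close>

lemma one_step_simplification_remove_pairs:
  assumes gas: "gasket_automaton N M" and os: "one_step_simplification M \<tau> \<kappa> M'"
  obtains A B where "(A, B) = (ta M, tb M) \<or> (A, B) = (tb M, ta M)" "(\<tau>, \<kappa>) \<in> Prel M A (tc M)"
    "M' = remove_pairs M (insert (\<tau>, \<kappa>) ({\<tau>} \<times> {l. (l, \<kappa>) \<in> Prel M A B}))"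
proof -
  have d: "ta M \<noteq> tb M" "ta M \<noteq> tc M" "tb M \<noteq> tc M"
    using gas unfolding gasket_automaton_def triangle_automaton_def by auto
  have "(\<tau>, \<kappa>) \<in> Pag M \<union> Pbg M" using os unfolding one_step_simplification_def by blast
  then show ?thesis
    using that[of "ta M" "tb M"] that[of "tb M" "ta M"] one_step_simplification_Pag[OF gas os]
      one_step_simplification_Pbg[OF gas os] Prel_labels[OF d] by auto
qed

locale gamma_isolated_simplification =
  fixes N :: nat and M :: tri and tau kap A B :: int
  assumes gasket: "gasket_automaton N M" and isolated: "gamma_isolated N M"
    and AB: "(A, B) = (ta M, tb M) \<or> (A, B) = (tb M, ta M)"
    and tau_kap: "(tau, kap) \<in> Prel M A (tc M)" and kap_double_maximal: "double_maximal M kap"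
begin

abbreviation "\<alpha> \<equiv> ta M"
abbreviation "\<beta> \<equiv> tb M"
abbreviation "\<gamma> \<equiv> tc M"
abbreviation "moves \<equiv> \<lambda>a b. tri_delta M Id (a, b)"

definition L :: "int set" where
  "L = {l. (l, kap) \<in> Prel M A B}"

lemma triangle: "triangle_automaton N M"
  using gasket unfolding gasket_automaton_def by blast

lemma labels_distinct: "\<alpha> \<noteq> \<beta>" "\<alpha> \<noteq> \<gamma>" "\<beta> \<noteq> \<gamma>"
  using triangle unfolding triangle_automaton_def by auto

lemma labels_in_Sig: "\<alpha> \<in> Sig N" "\<beta> \<in> Sig N" "\<gamma> \<in> Sig N"
  using isolated unfolding gamma_isolated_def by auto

lemma uniqueness: "(u, v) \<in> labpairs M \<Longrightarrow> (i, j) \<in> Prel M u v \<Longrightarrow> (i, j') \<in> Prel M u v \<Longrightarrow> j = j'"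
  by (rule gasket_uniqueness[OF gasket])

lemma A_B_G_distinct: "A \<noteq> B" "A \<noteq> \<gamma>" "B \<noteq> \<gamma>"
  using AB labels_distinct by auto

lemma A_B_labpairs: "(A, \<gamma>) \<in> labpairs M" "(\<gamma>, A) \<in> labpairs M" "(B, \<gamma>) \<in> labpairs M" "(\<gamma>, B) \<in> labpairs M"
  "(A, B) \<in> labpairs M" "(B, A) \<in> labpairs M"
  using AB labpairs_labels[OF labels_distinct] by auto

lemma Prel_swap: "(u, v) \<in> labpairs M \<Longrightarrow> (a, b) \<in> Prel M u v \<longleftrightarrow> (b, a) \<in> Prel M v u"
  using Prel_converse[OF labels_distinct] by auto

lemma gathering_ABG: "(a, c) \<in> Prel M A \<gamma> \<Longrightarrow> (a, b) \<in> Prel M B \<gamma> \<Longrightarrow> (b, c) \<in> Prel M A B"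
proof -
  assume h: "(a, c) \<in> Prel M A \<gamma>" "(a, b) \<in> Prel M B \<gamma>"
  note ps = Prel_labels[OF labels_distinct]
  from AB show ?thesis
  proof
    assume "(A, B) = (\<alpha>, \<beta>)"
    then have e: "A = \<alpha>" "B = \<beta>" by auto
    have "(a, c) \<in> Pag M" "(a, b) \<in> Pbg M" using h e ps by auto
    then have "(b, c) \<in> Pab M" using gasket_gathering[OF gasket] by blast
    then show ?thesis using e ps by auto
  next
    assume "(A, B) = (\<beta>, \<alpha>)"
    then have e: "A = \<beta>" "B = \<alpha>" by auto
    have "(a, c) \<in> Pbg M" "(a, b) \<in> Pag M" using h e ps by auto
    then have "(c, b) \<in> Pab M" using gasket_gathering[OF gasket] by blast
    then show ?thesis using e ps by auto
  qed
qed

lemma gathering_AGB: "(a, c) \<in> Prel M A \<gamma> \<Longrightarrow> (b, c) \<in> Prel M A B \<Longrightarrow> (a, b) \<in> Prel M B \<gamma>"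
proof -
  assume h: "(a, c) \<in> Prel M A \<gamma>" "(b, c) \<in> Prel M A B"
  note ps = Prel_labels[OF labels_distinct]
  from AB show ?thesis
  proof
    assume "(A, B) = (\<alpha>, \<beta>)"
    then have e: "A = \<alpha>" "B = \<beta>" by auto
    have "(a, c) \<in> Pag M" "(b, c) \<in> Pab M" using h e ps by auto
    then have "(a, b) \<in> Pbg M" using gasket_gathering[OF gasket] by blast
    then show ?thesis using e ps by auto
  next
    assume "(A, B) = (\<beta>, \<alpha>)"
    then have e: "A = \<beta>" "B = \<alpha>" by auto
    have "(a, c) \<in> Pbg M" "(c, b) \<in> Pab M" using h e ps by auto
    then have "(a, b) \<in> Pag M" using gasket_gathering[OF gasket] by blast
    then show ?thesis using e ps by auto
  qed
qed

lemma A_minimal: "(i, A) \<notin> Prel M A \<gamma>" "(i, A) \<notin> Prel M A B"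
proof -
  have bd: "uv_minimal M \<alpha> \<gamma> \<alpha>" "uv_minimal M \<alpha> \<beta> \<alpha>" "uv_minimal M \<beta> \<gamma> \<beta>" "uv_minimal M \<beta> \<alpha> \<beta>"
    using gasket labels_in_Sig unfolding gasket_automaton_def by auto
  from AB show "(i, A) \<notin> Prel M A \<gamma>" "(i, A) \<notin> Prel M A B"
    using bd unfolding uv_minimal_def by auto
qed

lemma G_isolated: "(u, v) \<in> labpairs M \<Longrightarrow> (\<gamma>, i) \<notin> Prel M u v \<and> (i, \<gamma>) \<notin> Prel M u v"
proof -
  assume l: "(u, v) \<in> labpairs M"
  have iso: "uv_isolated M \<alpha> \<gamma> \<gamma>" "uv_isolated M \<beta> \<gamma> \<gamma>" "uv_isolated M \<alpha> \<beta> \<gamma>"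
    using isolated unfolding gamma_isolated_def by auto
  then have f: "(\<gamma>, i) \<notin> Pag M" "(i, \<gamma>) \<notin> Pag M" "(\<gamma>, i) \<notin> Pbg M" "(i, \<gamma>) \<notin> Pbg M"
     "(\<gamma>, i) \<notin> Pab M" "(i, \<gamma>) \<notin> Pab M"
    unfolding uv_isolated_def uv_minimal_def uv_maximal_def using Prel_labels[OF labels_distinct] by auto
  from labpairs_cases[OF l] show ?thesis
  proof (elim disjE)
  qed (use f in \<open>simp_all add: Prel_labels[OF labels_distinct]\<close>)
qed

lemma kap_maximal: "(kap, k) \<notin> Prel M \<alpha> \<gamma>" "(kap, k) \<notin> Prel M \<beta> \<gamma>"
  using kap_double_maximal unfolding double_maximal_def uv_maximal_def by auto

lemma Prel_Sig: "(u, v) \<in> labpairs M \<Longrightarrow> Prel M u v \<subseteq> Sig N \<times> Sig N"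
proof -
  assume l: "(u, v) \<in> labpairs M"
  have s: "Pab M \<subseteq> Sig N \<times> Sig N" "Pag M \<subseteq> Sig N \<times> Sig N" "Pbg M \<subseteq> Sig N \<times> Sig N"
    using triangle unfolding triangle_automaton_def by auto
  from labpairs_cases[OF l] show ?thesis
  proof (elim disjE)
  qed (use s in \<open>auto simp: Prel_labels[OF labels_distinct]\<close>)
qed

lemma moves_St_labpairs: "tri_delta M Id (a, b) = St u v \<Longrightarrow> (u, v) \<in> labpairs M \<and> (a, b) \<in> Prel M u v"
  using tri_delta_Id_St_D Prel_nonempty_labpairs[OF labels_distinct] by blast

lemma labpairs_G: "(u, \<gamma>) \<in> labpairs M \<Longrightarrow> u = A \<or> u = B"
  using AB unfolding labpairs_def by auto

lemma labpairs_A: "(A, w) \<in> labpairs M \<Longrightarrow> w = B \<or> w = \<gamma>"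
  using AB unfolding labpairs_def by auto

lemma labpairs_A2: "(u, A) \<in> labpairs M \<Longrightarrow> u = B \<or> u = \<gamma>"
  using AB unfolding labpairs_def by auto

lemma tau_ne_kap: "tau \<noteq> kap"
  using tau_kap Prel_irrefl[OF triangle] by blast

lemma kap_ne_A: "kap \<noteq> A"
  using tau_kap A_minimal(1) by blast

lemma tau_ne_G: "tau \<noteq> \<gamma>"
  using tau_kap G_isolated[OF A_B_labpairs(1)] by blast

lemma kap_ne_G: "kap \<noteq> \<gamma>"
  using tau_kap G_isolated[OF A_B_labpairs(1)] by blast

lemma L_ne: "l \<in> L \<Longrightarrow> l \<noteq> tau \<and> l \<noteq> kap"
proof -
  assume "l \<in> L"
  then have h: "(l, kap) \<in> Prel M A B" unfolding L_def by simp
  have "l \<noteq> tau"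
  proof
    assume "l = tau"
    then have "(tau, kap) \<in> Prel M A B" using h by simp
    then have "(A, \<gamma>) = (A, B)" by (rule Prel_disjoint[OF triangle tau_kap])
    then show False using A_B_G_distinct by simp
  qed
  moreover have "l \<noteq> kap" using h Prel_irrefl[OF triangle] by blast
  ultimately show "l \<noteq> tau \<and> l \<noteq> kap" by simp
qed

lemma moves_from_gamma: "b \<noteq> \<gamma> \<Longrightarrow> moves \<gamma> b = Exit"
proof -
  assume "b \<noteq> \<gamma>"
  have "\<And>u v. (\<gamma>, b) \<notin> Prel M u v"
  proof
    fix u v assume h: "(\<gamma>, b) \<in> Prel M u v"
    then have "(u, v) \<in> labpairs M" by (rule Prel_nonempty_labpairs[OF labels_distinct])
    then have "(\<gamma>, b) \<notin> Prel M u v" using G_isolated by blast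
    then show False using h by simp
  qed
  then show "moves \<gamma> b = Exit" using tri_delta_Id_Exit[of \<gamma> b M] \<open>b \<noteq> \<gamma>\<close> by simp
qed

lemma moves_kap_maximal: "moves kap b = St u v \<Longrightarrow> v \<noteq> \<gamma>"
proof
  assume h: "moves kap b = St u v" "v = \<gamma>"
  then have l: "(u, \<gamma>) \<in> labpairs M" "(kap, b) \<in> Prel M u \<gamma>" using moves_St_labpairs by auto
  have "u = \<alpha> \<or> u = \<beta>" using l(1) unfolding labpairs_def by auto
  then show False using l(2) kap_maximal by auto
qed

lemma moves_kap_A_predecessors: "moves a kap = St A w \<Longrightarrow> a = tau \<or> a \<in> L"
proof -
  assume h: "moves a kap = St A w"
  then have l: "(A, w) \<in> labpairs M" "(a, kap) \<in> Prel M A w" using moves_St_labpairs by auto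
  from labpairs_A[OF l(1)] show "a = tau \<or> a \<in> L"
  proof
    assume "w = B" then show ?thesis using l(2) unfolding L_def by simp
  next
    assume "w = \<gamma>"
    then have "(kap, a) \<in> Prel M \<gamma> A" "(kap, tau) \<in> Prel M \<gamma> A" using l(2) tau_kap Prel_swap[OF A_B_labpairs(1)] by auto
    then show ?thesis using uniqueness[OF A_B_labpairs(2)] by blast
  qed
qed

lemma moves_tau_G_successors: "moves tau b = St u \<gamma> \<Longrightarrow> b = kap \<or> b \<in> L"
proof -
  assume h: "moves tau b = St u \<gamma>"
  then have l: "(u, \<gamma>) \<in> labpairs M" "(tau, b) \<in> Prel M u \<gamma>" using moves_St_labpairs by auto
  from labpairs_G[OF l(1)] show "b = kap \<or> b \<in> L"
  proof
    assume "u = A" then show ?thesis using l(2) tau_kap uniqueness[OF A_B_labpairs(1)] by blast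
  next
    assume "u = B" then have "(b, kap) \<in> Prel M A B" using gathering_ABG tau_kap l(2) by blast
    then show ?thesis unfolding L_def by simp
  qed
qed

lemma moves_A_minimal: "moves A b = St u v \<Longrightarrow> v \<noteq> A"
proof
  assume h: "moves A b = St u v" "v = A"
  then have l: "(u, A) \<in> labpairs M" "(A, b) \<in> Prel M u A" using moves_St_labpairs by auto
  have "(b, A) \<in> Prel M A u" using Prel_swap[OF l(1)] l(2) by blast
  then show False using labpairs_A2[OF l(1)] A_minimal by blast
qed

lemma moves_tau_L: "l \<in> L \<Longrightarrow> moves tau l = St B \<gamma>"
proof -
  assume "l \<in> L"
  then have "(tau, l) \<in> Prel M B \<gamma>" using gathering_AGB tau_kap unfolding L_def by blast
  moreover have "tau \<noteq> l" using L_ne[OF \<open>l \<in> L\<close>] by simp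
  ultimately show "moves tau l = St B \<gamma>" using tri_delta_Id_St[OF triangle] by simp
qed

lemma moves_L_kap: "l \<in> L \<Longrightarrow> moves l kap = St A B"
proof -
  assume "l \<in> L"
  then have "(l, kap) \<in> Prel M A B" unfolding L_def by simp
  moreover have "l \<noteq> kap" using L_ne[OF \<open>l \<in> L\<close>] by simp
  ultimately show ?thesis using tri_delta_Id_St[OF triangle] by simp
qed

lemma moves_leaves_Id: "leaves_Id moves"
  unfolding leaves_Id_def
proof (intro allI impI)
  fix a b :: int assume "a \<noteq> b" then show "moves a b \<noteq> Id" by (rule tri_delta_Id_not_Id)
qed

lemma moves_St_ne: "moves a b = St u v \<Longrightarrow> u \<noteq> v"
proof -
  assume "moves a b = St u v"
  then have "(u, v) \<in> labpairs M" using moves_St_labpairs by blast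
  then show "u \<noteq> v" unfolding labpairs_def by simp
qed

definition removed :: "(int \<times> int) set" where
  "removed = insert (tau, kap) ({tau} \<times> L)"

lemma removed_subset: "removed \<subseteq> Pab M \<union> Pag M \<union> Pbg M"
proof -
  have "(tau, l) \<in> Prel M B \<gamma>" if "l \<in> L" for l using gathering_AGB tau_kap that unfolding L_def by blast
  then show ?thesis using tau_kap AB Prel_labels[OF labels_distinct] unfolding removed_def by auto
qed

sublocale S: recoding_setting tau kap A \<gamma> moves "\<lambda>a b. tri_delta (remove_pairs M removed) Id (a, b)" B L N
proof unfold_locales
  show "tau \<noteq> kap" "kap \<noteq> A" "tau \<noteq> \<gamma>" "kap \<noteq> \<gamma>" "A \<noteq> \<gamma>"
    by (fact tau_ne_kap, fact kap_ne_A, fact tau_ne_G, fact kap_ne_G, fact A_B_G_distinct(2))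
  show "leaves_Id moves" by (rule moves_leaves_Id)
  show "swap_symmetric moves" by (rule tri_delta_Id_swap[OF triangle])
  show "moves a a = Id" for a by simp
  show "u \<noteq> v" if "moves a b = St u v" for a b u v using that by (rule moves_St_ne)
  show "moves \<gamma> b = Exit" if "b \<noteq> \<gamma>" for b using that by (rule moves_from_gamma)
  show "v \<noteq> \<gamma>" if "moves kap b = St u v" for b u v using that by (rule moves_kap_maximal)
  show "v \<noteq> A" if "moves A b = St u v" for b u v using that by (rule moves_A_minimal)
  show "a = tau \<or> a \<in> L" if "moves a kap = St A w" for a w using that by (rule moves_kap_A_predecessors)
  show "b = kap \<or> b \<in> L" if "moves tau b = St u \<gamma>" for b u using that by (rule moves_tau_G_successors)
  show "moves tau kap = St A \<gamma>" using tri_delta_Id_St[OF triangle tau_ne_kap tau_kap] .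
  show "moves l kap = St A B" if "l \<in> L" for l using that by (rule moves_L_kap)
  show "moves tau l = St B \<gamma>" if "l \<in> L" for l using that by (rule moves_tau_L)
  show "l \<noteq> tau \<and> l \<noteq> kap" if "l \<in> L" for l using that by (rule L_ne)
  show "tri_delta (remove_pairs M removed) Id (a, b) =
      (if (a, b) \<in> insert (tau, kap) ({tau} \<times> L) \<or> (b, a) \<in> insert (tau, kap) ({tau} \<times> L) then Exit
       else moves a b)" for a b
    using tri_delta_remove_pairs[OF triangle removed_subset] unfolding removed_def by auto
  have "(tau, kap) \<in> Sig N \<times> Sig N" using Prel_Sig[OF A_B_labpairs(1)] tau_kap by blast
  then show "tau \<in> Sig N" "kap \<in> Sig N" by auto
  show "A \<in> Sig N" "\<gamma> \<in> Sig N" using AB labels_in_Sig by auto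
qed

end

theorem theorem5p1:
  fixes N :: nat and M M' :: tri and \<tau> \<kappa> :: int
  assumes "gasket_automaton N M"
    and "gamma_isolated N M"
    and "Pag M \<union> Pbg M \<noteq> {}"
    and "one_step_simplification M \<tau> \<kappa> M'"
  shows "\<exists>g. bij_betw g (Omega N \<kappa>) (Omega N \<kappa>) \<and>
    (\<forall>x\<in>Omega N \<kappa>. \<forall>y\<in>Omega N \<kappa>.
        T_M M x y \<le> T_M M' (g x) (g y) + 5 \<and> T_M M' (g x) (g y) \<le> T_M M x y + 5)"
proof -
  obtain A B where AB: "(A, B) = (ta M, tb M) \<or> (A, B) = (tb M, ta M)" and tk: "(\<tau>, \<kappa>) \<in> Prel M A (tc M)"
    and M': "M' = remove_pairs M (insert (\<tau>, \<kappa>) ({\<tau>} \<times> {l. (l, \<kappa>) \<in> Prel M A B}))"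
    using one_step_simplification_remove_pairs[OF assms(1,4)] .
  have "double_maximal M \<kappa>" using assms(4) unfolding one_step_simplification_def by blast
  then interpret gamma_isolated_simplification N M \<tau> \<kappa> A B
    using assms(1,2) AB tk by unfold_locales
  have "M' = remove_pairs M removed" unfolding M' removed_def L_def ..
  then show ?thesis
    using S.bij_betw_recode S.T_close S.letters_in_Sig unfolding S.T_close_def T_M_eq_T_of by blast
qed

end
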